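(* Let $f\colon[0,1]\times\mathbb R\to\mathbb R$ be continuous, and let $A,B\colon[0,1]\to\mathbb R$ be of bounded variation with $\operatorname{var}_{[0,1]}A+\operatorname{var}_{[0,1]}(A-B)<1$. Then there exists $\lambda_0>0$ such that for every $\lambda\in\mathbb R$ with $|\lambda|\le\lambda_0$ the boundary value problem $x''(t)=-\lambda f(t,x(t))$, $t\in[0,1]$, $x(0)=\int_0^1x(s)\,dA(s)$, $x(1)=\int_0^1x(s)\,dB(s)$ has a solution.
   Context: $\operatorname{var}_{[0,1]}$ is the Jordan variation; integrals in the boundary conditions are Riemann–Stieltjes integrals; a solution is a twice continuously differentiable $x\colon[0,1]\to\mathbb R$ satisfying the equation and the boundary conditions. *)

theory Defs
  imports "HOL-Analysis.Analysis"
begin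

definition partitions :: "real \<Rightarrow> real \<Rightarrow> real list set" where
  "partitions a b = {ts. length ts \<ge> 2 \<and> hd ts = a \<and> last ts = b \<and> sorted ts}"

definition variation_sum :: "(real \<Rightarrow> real) \<Rightarrow> real list \<Rightarrow> real" where
  "variation_sum g ts = (\<Sum>i < length ts - 1. \<bar>g (ts ! Suc i) - g (ts ! i)\<bar>)"

definition bounded_variation_on :: "(real \<Rightarrow> real) \<Rightarrow> real \<Rightarrow> real \<Rightarrow> bool" where
  "bounded_variation_on g a b \<longleftrightarrow> bdd_above (variation_sum g ` partitions a b)"

definition total_variation :: "(real \<Rightarrow> real) \<Rightarrow> real \<Rightarrow> real \<Rightarrow> real" where
  "total_variation g a b = Sup (variation_sum g ` partitions a b)"

definition mesh :: "real list \<Rightarrow> real" where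
  "mesh ts = Max (insert 0 {ts ! Suc i - ts ! i | i. i < length ts - 1})"

definition RS_sum :: "(real \<Rightarrow> real) \<Rightarrow> (real \<Rightarrow> real) \<Rightarrow> real list \<Rightarrow> (nat \<Rightarrow> real) \<Rightarrow> real" where
  "RS_sum x g ts \<xi> = (\<Sum>i < length ts - 1. x (\<xi> i) * (g (ts ! Suc i) - g (ts ! i)))"

definition has_RS_integral :: "(real \<Rightarrow> real) \<Rightarrow> (real \<Rightarrow> real) \<Rightarrow> real \<Rightarrow> real \<Rightarrow> real \<Rightarrow> bool" where
  "has_RS_integral x g a b I \<longleftrightarrow>
     (\<forall>\<epsilon>>0. \<exists>\<delta>>0. \<forall>ts \<in> partitions a b. \<forall>\<xi>.
        mesh ts < \<delta> \<longrightarrow> (\<forall>i < length ts - 1. ts ! i \<le> \<xi> i \<and> \<xi> i \<le> ts ! Suc i) \<longrightarrow>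
        \<bar>RS_sum x g ts \<xi> - I\<bar> < \<epsilon>)"

end

theory Submission
  imports Defs "HOL-Complex_Analysis.Great_Picard"
begin

text \<open>The problem is equivalent to the integral equation
  \<open>x t = x 0 + x' 0 * t - \<lambda> \<integral>\<^sub>0\<^sup>t \<integral>\<^sub>0\<^sup>s f(r, x r) dr ds\<close> together with the two Stieltjes
  boundary conditions. Since f is merely continuous, the argument of f is first delayed by d > 0;
  the delayed equation is then solved step by step for every initial value and slope (a, b).
  For \<open>\<bar>\<lambda>\<bar>\<close> small, the condition \<open>var A + var (A - B) < 1\<close> makes a map of the (a, b)-plane,
  whose fixed points give delayed solutions satisfying the boundary conditions, carry the unit
  l1-ball into itself, so Brouwer's theorem applies. These delayed solutions are uniformly bounded
  and equi-Lipschitz, hence by Arzela--Ascoli converge along a subsequence as \<open>d \<rightarrow> 0\<close>; the limit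
  solves the integral equation, and the boundary conditions pass to the limit because Stieltjes
  integrals against functions of bounded variation are continuous under uniform convergence. The
  Stieltjes integrals of \<open>C\<^sup>1\<close> functions exist by integration by parts against the two monotone
  parts of the Jordan decomposition of the integrator.\<close>

section \<open>Partitions and variation\<close>

lemma partitions_nth_bounds:
  assumes "ts \<in> partitions a b" "i < length ts"
  shows "a \<le> ts ! i" "ts ! i \<le> b"
proof -
  have s: "sorted ts" and ne: "ts \<noteq> []"
    using assms(1) unfolding partitions_def by auto
  have "ts ! 0 \<le> ts ! i" "ts ! i \<le> ts ! (length ts - 1)"
    using s assms(2) by (simp_all add: sorted_nth_mono)
  then show "a \<le> ts ! i" "ts ! i \<le> b"
    using assms(1) ne unfolding partitions_def by (simp_all add: hd_conv_nth last_conv_nth)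
qed

lemma partitions_first_last:
  assumes "ts \<in> partitions a b"
  shows "ts ! 0 = a" "ts ! (length ts - 1) = b"
proof -
  have "ts \<noteq> []" using assms unfolding partitions_def by auto
  then show "ts ! 0 = a" "ts ! (length ts - 1) = b"
    using assms unfolding partitions_def by (simp_all add: hd_conv_nth last_conv_nth)
qed

lemma partitions_nth_le_Suc:
  "ts \<in> partitions a b \<Longrightarrow> i < length ts - 1 \<Longrightarrow> ts ! i \<le> ts ! Suc i"
  unfolding partitions_def by (auto simp: sorted_nth_mono)

lemma partitions_two: "a \<le> b \<Longrightarrow> [a, b] \<in> partitions a b"
  unfolding partitions_def by auto

lemma partitions_snoc:
  assumes "ts \<in> partitions a b" "b \<le> c"
  shows "ts @ [c] \<in> partitions a c"
proof -
  have "\<forall>x \<in> set ts. x \<le> c"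
    using partitions_nth_bounds(2)[OF assms(1)] assms(2) by (force simp: in_set_conv_nth)
  moreover have "ts \<noteq> []" using assms(1) unfolding partitions_def by auto
  ultimately show ?thesis using assms(1) unfolding partitions_def by (auto simp: sorted_append)
qed

lemma variation_sum_snoc:
  assumes "ts \<noteq> []"
  shows "variation_sum g (ts @ [z]) = variation_sum g ts + \<bar>g z - g (last ts)\<bar>"
proof -
  obtain m where m: "length ts = Suc m" using assms by (cases ts) auto
  have "variation_sum g (ts @ [z]) = (\<Sum>i < Suc m. \<bar>g ((ts@[z]) ! Suc i) - g ((ts@[z]) ! i)\<bar>)"
    unfolding variation_sum_def using m by simp
  also have "\<dots> = variation_sum g ts + \<bar>g z - g (ts ! m)\<bar>"
    unfolding variation_sum_def using m by (auto simp: nth_append intro!: sum.cong)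
  finally show ?thesis using m assms by (simp add: last_conv_nth)
qed

lemma nth_Suc_minus_nth_le_mesh:
  "i < length ts - 1 \<Longrightarrow> ts ! Suc i - ts ! i \<le> mesh ts"
  unfolding mesh_def by (intro Max_ge) auto

lemma mesh_nonneg: "0 \<le> mesh ts"
  unfolding mesh_def by (rule Max_ge) auto

lemma partition_with_small_mesh:
  assumes "a \<le> b" "d > 0"
  obtains ts where "ts \<in> partitions a b" "mesh ts < d"
proof -
  obtain n :: nat where "(b - a) / d < real n" using reals_Archimedean2 by blast
  moreover have "0 \<le> (b - a) / d" using assms by simp
  ultimately have n: "(b - a) / d < real n" "n > 0" by (simp_all add: gr0I)
  define ts where "ts = map (\<lambda>k. a + (b - a) * real k / real n) [0..<Suc n]"
  have len: "length ts = Suc n" by (simp add: ts_def)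
  have nth: "ts ! k = a + (b - a) * real k / real n" if "k < Suc n" for k
    using that by (simp add: ts_def nth_map_upt del: upt_Suc)
  have "sorted ts" unfolding sorted_iff_nth_mono using nth len assms(1)
    by (auto intro!: divide_right_mono mult_left_mono)
  moreover have "hd ts = a" "last ts = b"
    using len nth[of 0] nth[of n] n(2)
    by (simp_all add: hd_conv_nth last_conv_nth[of ts] length_greater_0_conv[symmetric])
  ultimately have ts: "ts \<in> partitions a b" using len n(2) unfolding partitions_def by auto
  have "ts ! Suc i - ts ! i = (b - a) / real n" if "i < n" for i
    using that nth[of i] nth[of "Suc i"] by (simp add: field_simps)
  then have "mesh ts \<le> (b - a) / real n"
    unfolding mesh_def using len assms(1) by (subst Max_le_iff) auto
  also have "\<dots> < d" using n assms by (simp add: divide_less_eq mult.commute)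
  finally show ?thesis using that ts by blast
qed

lemma variation_sum_le_total_variation:
  "bounded_variation_on g a b \<Longrightarrow> ts \<in> partitions a b \<Longrightarrow> variation_sum g ts \<le> total_variation g a b"
  unfolding bounded_variation_on_def total_variation_def by (intro cSup_upper) auto

lemma total_variation_nonneg:
  assumes "bounded_variation_on g a b" "a \<le> b"
  shows "0 \<le> total_variation g a b"
proof -
  have "0 \<le> variation_sum g [a, b]" unfolding variation_sum_def by simp
  also have "\<dots> \<le> total_variation g a b"
    by (rule variation_sum_le_total_variation[OF assms(1) partitions_two[OF assms(2)]])
  finally show ?thesis .
qed

lemma bounded_variation_on_diff:
  assumes "bounded_variation_on f a b" "bounded_variation_on g a b"
  shows "bounded_variation_on (\<lambda>s. f s - g s) a b"
proof -
  have "variation_sum (\<lambda>s. f s - g s) ts \<le> total_variation f a b + total_variation g a b"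
    if "ts \<in> partitions a b" for ts
  proof -
    have "variation_sum (\<lambda>s. f s - g s) ts \<le> variation_sum f ts + variation_sum g ts"
      unfolding variation_sum_def sum.distrib[symmetric] by (rule sum_mono) linarith
    then show ?thesis
      using variation_sum_le_total_variation[OF assms(1) that]
        variation_sum_le_total_variation[OF assms(2) that] by linarith
  qed
  then show ?thesis unfolding bounded_variation_on_def bdd_above_def by blast
qed

lemma total_variation_add_jump_le:
  assumes bv: "bounded_variation_on g a b" and "a \<le> t" "t \<le> s" "s \<le> b"
  shows "total_variation g a t + \<bar>g s - g t\<bar> \<le> total_variation g a s"
proof -
  have bdd: "bdd_above (variation_sum g ` partitions a s)"
  proof (rule bdd_aboveI2)
    fix ps assume ps: "ps \<in> partitions a s"
    then have "ps \<noteq> []" by (auto simp: partitions_def)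
    then have "variation_sum g ps \<le> variation_sum g (ps @ [b])"
      by (simp add: variation_sum_snoc)
    also have "\<dots> \<le> total_variation g a b"
      using variation_sum_le_total_variation[OF bv partitions_snoc[OF ps \<open>s \<le> b\<close>]] .
    finally show "variation_sum g ps \<le> total_variation g a b" .
  qed
  have "Sup (variation_sum g ` partitions a t) \<le> total_variation g a s - \<bar>g s - g t\<bar>"
  proof (rule cSup_least)
    show "variation_sum g ` partitions a t \<noteq> {}" using partitions_two[OF \<open>a \<le> t\<close>] by blast
    fix v assume "v \<in> variation_sum g ` partitions a t"
    then obtain ps where ps: "ps \<in> partitions a t" "v = variation_sum g ps" by auto
    then have "ps \<noteq> []" "last ps = t" by (auto simp: partitions_def)
    moreover have "variation_sum g (ps @ [s]) \<le> total_variation g a s"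
      unfolding total_variation_def
      by (rule cSup_upper[OF imageI[OF partitions_snoc[OF ps(1) \<open>t \<le> s\<close>]] bdd])
    ultimately show "v \<le> total_variation g a s - \<bar>g s - g t\<bar>"
      using ps(2) by (simp add: variation_sum_snoc)
  qed
  then show ?thesis unfolding total_variation_def by simp
qed

lemma mono_on_total_variation:
  assumes "bounded_variation_on g a b"
  shows "mono_on {a..b} (\<lambda>t. total_variation g a t)"
    and "mono_on {a..b} (\<lambda>t. total_variation g a t - g t)"
proof -
  have jump: "total_variation g a t + \<bar>g s - g t\<bar> \<le> total_variation g a s"
    if "t \<in> {a..b}" "s \<in> {a..b}" "t \<le> s" for t s
    using total_variation_add_jump_le[OF assms, of t s] that by auto
  show "mono_on {a..b} (\<lambda>t. total_variation g a t)"
  proof (rule mono_onI)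
    fix t s assume "t \<in> {a..b}" "s \<in> {a..b}" "t \<le> s"
    with jump[of t s] show "total_variation g a t \<le> total_variation g a s" by linarith
  qed
  show "mono_on {a..b} (\<lambda>t. total_variation g a t - g t)"
  proof (rule mono_onI)
    fix t s assume "t \<in> {a..b}" "s \<in> {a..b}" "t \<le> s"
    with jump[of t s] abs_ge_self[of "g s - g t"]
    show "total_variation g a t - g t \<le> total_variation g a s - g s" by linarith
  qed
qed

section \<open>The Riemann--Stieltjes integral\<close>

lemma has_RS_integral_approx:
  assumes "has_RS_integral x g a b I" "a \<le> b" "e > 0"
  obtains ts where "ts \<in> partitions a b" "\<bar>RS_sum x g ts ((!) ts) - I\<bar> < e"
proof -
  obtain \<delta> where "\<delta> > 0" and \<delta>: "\<forall>ts \<in> partitions a b. \<forall>\<xi>. mesh ts < \<delta> \<longrightarrow>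
      (\<forall>i < length ts - 1. ts ! i \<le> \<xi> i \<and> \<xi> i \<le> ts ! Suc i) \<longrightarrow> \<bar>RS_sum x g ts \<xi> - I\<bar> < e"
    using assms(1,3) unfolding has_RS_integral_def by blast
  obtain ts where ts: "ts \<in> partitions a b" "mesh ts < \<delta>"
    using partition_with_small_mesh[OF assms(2) \<open>\<delta> > 0\<close>] .
  then show ?thesis using that \<delta> partitions_nth_le_Suc[OF ts(1)] by blast
qed

lemma has_RS_integral_unique:
  assumes "has_RS_integral x g a b I" "has_RS_integral x g a b J" "a \<le> b"
  shows "I = J"
proof (rule ccontr)
  assume "I \<noteq> J"
  then have e: "\<bar>I - J\<bar> / 2 > 0" by simp
  obtain \<delta>1 where "\<delta>1 > 0" and \<delta>1: "\<forall>ts \<in> partitions a b. \<forall>\<xi>. mesh ts < \<delta>1 \<longrightarrow>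
      (\<forall>i < length ts - 1. ts ! i \<le> \<xi> i \<and> \<xi> i \<le> ts ! Suc i) \<longrightarrow>
      \<bar>RS_sum x g ts \<xi> - I\<bar> < \<bar>I - J\<bar> / 2"
    using assms(1) e unfolding has_RS_integral_def by blast
  obtain \<delta>2 where "\<delta>2 > 0" and \<delta>2: "\<forall>ts \<in> partitions a b. \<forall>\<xi>. mesh ts < \<delta>2 \<longrightarrow>
      (\<forall>i < length ts - 1. ts ! i \<le> \<xi> i \<and> \<xi> i \<le> ts ! Suc i) \<longrightarrow>
      \<bar>RS_sum x g ts \<xi> - J\<bar> < \<bar>I - J\<bar> / 2"
    using assms(2) e unfolding has_RS_integral_def by blast
  obtain ts where ts: "ts \<in> partitions a b" "mesh ts < min \<delta>1 \<delta>2"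
    using partition_with_small_mesh[OF assms(3), of "min \<delta>1 \<delta>2"] \<open>\<delta>1 > 0\<close> \<open>\<delta>2 > 0\<close> by auto
  then have "\<bar>RS_sum x g ts ((!) ts) - I\<bar> < \<bar>I - J\<bar> / 2" "\<bar>RS_sum x g ts ((!) ts) - J\<bar> < \<bar>I - J\<bar> / 2"
    using \<delta>1 \<delta>2 partitions_nth_le_Suc[OF ts(1)] by auto
  then show False by (auto simp: abs_if split: if_split_asm)
qed

lemma abs_RS_sum_le:
  assumes "ts \<in> partitions a b" and "\<And>t. t \<in> {a..b} \<Longrightarrow> \<bar>x t\<bar> \<le> M"
  shows "\<bar>RS_sum x g ts ((!) ts)\<bar> \<le> M * variation_sum g ts"
proof -
  have "\<bar>RS_sum x g ts ((!) ts)\<bar> \<le> (\<Sum>i < length ts - 1. \<bar>x (ts ! i)\<bar> * \<bar>g (ts ! Suc i) - g (ts ! i)\<bar>)"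
    unfolding RS_sum_def abs_mult[symmetric] by (rule sum_abs)
  also have "\<dots> \<le> (\<Sum>i < length ts - 1. M * \<bar>g (ts ! Suc i) - g (ts ! i)\<bar>)"
    using assms partitions_nth_bounds[OF assms(1)] by (intro sum_mono mult_right_mono) auto
  finally show ?thesis unfolding variation_sum_def by (simp add: sum_distrib_left)
qed

lemma has_RS_integral_bound:
  assumes "has_RS_integral x g a b I" "bounded_variation_on g a b" "a \<le> b"
    and "\<And>t. t \<in> {a..b} \<Longrightarrow> \<bar>x t\<bar> \<le> M" "M \<ge> 0"
  shows "\<bar>I\<bar> \<le> M * total_variation g a b"
proof (rule field_le_epsilon)
  fix e :: real assume "e > 0"
  then obtain ts where ts: "ts \<in> partitions a b" "\<bar>RS_sum x g ts ((!) ts) - I\<bar> < e"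
    using has_RS_integral_approx[OF assms(1,3)] by blast
  have "M * variation_sum g ts \<le> M * total_variation g a b"
    by (rule mult_left_mono[OF variation_sum_le_total_variation[OF assms(2) ts(1)] assms(5)])
  moreover have "\<bar>RS_sum x g ts ((!) ts)\<bar> \<le> M * variation_sum g ts"
    by (rule abs_RS_sum_le[OF ts(1) assms(4)])
  ultimately show "\<bar>I\<bar> \<le> M * total_variation g a b + e" using ts(2) by linarith
qed

lemma has_RS_integral_diff_sums:
  assumes "has_RS_integral x g a b I" "has_RS_integral y h a b J"
    and "\<And>ts \<xi>. RS_sum z k ts \<xi> = RS_sum x g ts \<xi> - RS_sum y h ts \<xi>"
  shows "has_RS_integral z k a b (I - J)"
  unfolding has_RS_integral_def
proof (intro allI impI)
  fix e :: real assume "e > 0"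
  then have "e/2 > 0" by simp
  then obtain \<delta>1 where "\<delta>1 > 0" and \<delta>1: "\<forall>ts \<in> partitions a b. \<forall>\<xi>. mesh ts < \<delta>1 \<longrightarrow>
      (\<forall>i < length ts - 1. ts ! i \<le> \<xi> i \<and> \<xi> i \<le> ts ! Suc i) \<longrightarrow> \<bar>RS_sum x g ts \<xi> - I\<bar> < e/2"
    using assms(1) unfolding has_RS_integral_def by blast
  obtain \<delta>2 where "\<delta>2 > 0" and \<delta>2: "\<forall>ts \<in> partitions a b. \<forall>\<xi>. mesh ts < \<delta>2 \<longrightarrow>
      (\<forall>i < length ts - 1. ts ! i \<le> \<xi> i \<and> \<xi> i \<le> ts ! Suc i) \<longrightarrow> \<bar>RS_sum y h ts \<xi> - J\<bar> < e/2"
    using assms(2) \<open>e/2 > 0\<close> unfolding has_RS_integral_def by blast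
  show "\<exists>\<delta>>0. \<forall>ts\<in>partitions a b. \<forall>\<xi>. mesh ts < \<delta> \<longrightarrow>
        (\<forall>i<length ts - 1. ts ! i \<le> \<xi> i \<and> \<xi> i \<le> ts ! Suc i) \<longrightarrow>
        \<bar>RS_sum z k ts \<xi> - (I - J)\<bar> < e"
  proof (intro exI[of _ "min \<delta>1 \<delta>2"] conjI ballI allI impI)
    fix ts \<xi> assume "ts \<in> partitions a b" "mesh ts < min \<delta>1 \<delta>2"
      "\<forall>i<length ts - 1. ts ! i \<le> \<xi> i \<and> \<xi> i \<le> ts ! Suc i"
    with \<delta>1 \<delta>2 have "\<bar>RS_sum x g ts \<xi> - I\<bar> < e/2" "\<bar>RS_sum y h ts \<xi> - J\<bar> < e/2" by auto
    then show "\<bar>RS_sum z k ts \<xi> - (I - J)\<bar> < e" unfolding assms(3) by linarith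
  qed (use \<open>\<delta>1 > 0\<close> \<open>\<delta>2 > 0\<close> in auto)
qed

lemma has_RS_integral_diff:
  "has_RS_integral x g a b I \<Longrightarrow> has_RS_integral y g a b J \<Longrightarrow>
   has_RS_integral (\<lambda>t. x t - y t) g a b (I - J)"
  by (rule has_RS_integral_diff_sums) (simp_all add: RS_sum_def sum_subtractf[symmetric] left_diff_distrib)

lemma has_RS_integral_diff_integrator:
  "has_RS_integral x g a b I \<Longrightarrow> has_RS_integral x h a b J \<Longrightarrow>
   has_RS_integral x (\<lambda>t. g t - h t) a b (I - J)"
  by (rule has_RS_integral_diff_sums) (simp_all add: RS_sum_def sum_subtractf[symmetric] algebra_simps)

lemma has_RS_integral_diff_bound:
  assumes "has_RS_integral x g a b I" "has_RS_integral y g a b J"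
    and "bounded_variation_on g a b" "a \<le> b" "\<And>t. t \<in> {a..b} \<Longrightarrow> \<bar>x t - y t\<bar> \<le> e"
  shows "\<bar>I - J\<bar> \<le> e * total_variation g a b"
proof -
  have "0 \<le> e" using assms(4) assms(5)[of a] by auto
  show ?thesis
    by (rule has_RS_integral_bound[OF has_RS_integral_diff[OF assms(1,2)] assms(3,4) _ \<open>0 \<le> e\<close>])
       (rule assms(5))
qed

lemma has_RS_integral_uniform_limit:
  assumes "bounded_variation_on g a b" "a \<le> b"
    and "\<And>n. has_RS_integral (Y n) g a b (c n)" "has_RS_integral x g a b I"
    and "uniform_limit {a..b} Y x sequentially"
  shows "c \<longlonglongrightarrow> I"
proof (rule LIMSEQ_I)
  fix e :: real assume "e > 0"
  define V where "V = total_variation g a b"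
  have "V \<ge> 0" unfolding V_def by (rule total_variation_nonneg[OF assms(1,2)])
  then have "e / (V + 1) > 0" using \<open>e > 0\<close> by simp
  with assms(5) obtain N where N: "\<forall>n\<ge>N. \<forall>t\<in>{a..b}. \<bar>Y n t - x t\<bar> < e / (V + 1)"
    unfolding uniform_limit_sequentially_iff dist_real_def by blast
  have "\<bar>c n - I\<bar> < e" if "n \<ge> N" for n
  proof -
    have "\<bar>c n - I\<bar> \<le> e / (V + 1) * V"
      unfolding V_def by (rule has_RS_integral_diff_bound[OF assms(3,4,1,2)])
        (use N that in \<open>auto simp: V_def intro: less_imp_le\<close>)
    also have "\<dots> < e" using \<open>V \<ge> 0\<close> \<open>e > 0\<close> by (simp add: field_simps)
    finally show ?thesis .
  qed
  then show "\<exists>N. \<forall>n\<ge>N. norm (c n - I) < e" by auto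
qed

lemma abs_increment_minus_weighted_integral_le:
  fixes g y y' :: "real \<Rightarrow> real"
  assumes "p \<le> q"
    and y: "\<And>t. t \<in> {p..q} \<Longrightarrow> (y has_real_derivative y' t) (at t within {p..q})"
    and M: "\<And>t. t \<in> {p..q} \<Longrightarrow> \<bar>y' t\<bar> \<le> M"
    and gi: "(\<lambda>s. g s * y' s) integrable_on {p..q}"
    and K: "\<And>s. s \<in> {p..q} \<Longrightarrow> \<bar>c - g s\<bar> \<le> K"
  shows "\<bar>c * (y q - y p) - integral {p..q} (\<lambda>s. g s * y' s)\<bar> \<le> M * K * (q - p)"
proof -
  have "(y' has_integral (y q - y p)) {p..q}"
    by (rule fundamental_theorem_of_calculus[OF \<open>p \<le> q\<close>])
       (use y in \<open>simp add: has_real_derivative_iff_has_vector_derivative[symmetric]\<close>)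
  then have hi: "((\<lambda>s. (c - g s) * y' s) has_integral
      (c * (y q - y p) - integral {p..q} (\<lambda>s. g s * y' s))) {p..q}"
    unfolding left_diff_distrib by (intro has_integral_diff has_integral_mult_right integrable_integral gi)
  have "norm (c * (y q - y p) - integral {p..q} (\<lambda>s. g s * y' s)) \<le> M * K * measure lborel {p..q}"
  proof (rule has_integral_bound_real[OF _ finite.emptyI hi])
    have "0 \<le> M" "0 \<le> K"
      using M[of p] K[of p] abs_ge_zero[of "y' p"] abs_ge_zero[of "c - g p"] \<open>p \<le> q\<close> by auto
    then show "0 \<le> M * K" by simp
    fix s assume "s \<in> {p..q} - {}"
    then have "\<bar>c - g s\<bar> * \<bar>y' s\<bar> \<le> K * M" using K[of s] M[of s] by (intro mult_mono) auto
    then show "norm ((c - g s) * y' s) \<le> M * K" by (simp add: abs_mult mult.commute)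
  qed
  then show ?thesis using \<open>p \<le> q\<close> by simp
qed

text \<open>On a cell [u,v] with tag \<xi>, the error of the Stieltjes sum against the integration by parts
  formula is \<open>\<integral>\<^sub>\<xi>\<^sup>v (g v - g s) y' s ds + \<integral>\<^sub>u\<^sup>\<xi> (g u - g s) y' s ds\<close>.\<close>

lemma RS_cell_error_le:
  fixes g y y' :: "real \<Rightarrow> real"
  assumes g: "mono_on {a..b} g"
    and y: "\<And>t. t \<in> {a..b} \<Longrightarrow> (y has_real_derivative y' t) (at t within {a..b})"
    and M: "\<And>t. t \<in> {a..b} \<Longrightarrow> \<bar>y' t\<bar> \<le> M"
    and gi: "(\<lambda>s. g s * y' s) integrable_on {a..b}"
    and uv: "a \<le> u" "u \<le> \<xi>" "\<xi> \<le> v" "v \<le> b"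
  shows "\<bar>y v * g v - y u * g u - integral {u..v} (\<lambda>s. g s * y' s) - y \<xi> * (g v - g u)\<bar>
          \<le> M * (v - u) * (g v - g u)"
proof -
  let ?h = "\<lambda>s. g s * y' s"
  have half: "\<bar>c * (y q - y p) - integral {p..q} ?h\<bar> \<le> M * (g v - g u) * (q - p)"
    if "u \<le> p" "p \<le> q" "q \<le> v" "c \<in> {g u, g v}" for c p q
  proof (rule abs_increment_minus_weighted_integral_le[OF \<open>p \<le> q\<close>])
    show "(y has_real_derivative y' t) (at t within {p..q})" if "t \<in> {p..q}" for t
      by (rule DERIV_subset[OF y]) (use that \<open>u \<le> p\<close> \<open>q \<le> v\<close> uv in auto)
    show "?h integrable_on {p..q}"
      by (rule integrable_on_subinterval[OF gi]) (use \<open>u \<le> p\<close> \<open>q \<le> v\<close> uv in auto)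
    show "\<bar>c - g s\<bar> \<le> g v - g u" if "s \<in> {p..q}" for s
      using mono_onD[OF g, of u s] mono_onD[OF g, of s v] that \<open>u \<le> p\<close> \<open>q \<le> v\<close> uv \<open>c \<in> {g u, g v}\<close>
      by auto
  qed (use M \<open>u \<le> p\<close> \<open>q \<le> v\<close> uv in auto)
  have "integral {u..v} ?h = integral {u..\<xi>} ?h + integral {\<xi>..v} ?h"
    by (rule Henstock_Kurzweil_Integration.integral_combine[symmetric, OF uv(2,3)],
        rule integrable_on_subinterval[OF gi]) (use uv in auto)
  then have "y v * g v - y u * g u - integral {u..v} ?h - y \<xi> * (g v - g u)
      = (g v * (y v - y \<xi>) - integral {\<xi>..v} ?h) + (g u * (y \<xi> - y u) - integral {u..\<xi>} ?h)"
    by (simp add: algebra_simps)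
  also have "\<bar>\<dots>\<bar> \<le> M * (g v - g u) * (v - \<xi>) + M * (g v - g u) * (\<xi> - u)"
  proof -
    have "\<bar>g v * (y v - y \<xi>) - integral {\<xi>..v} ?h\<bar> \<le> M * (g v - g u) * (v - \<xi>)"
      "\<bar>g u * (y \<xi> - y u) - integral {u..\<xi>} ?h\<bar> \<le> M * (g v - g u) * (\<xi> - u)"
      by (rule half; use uv in simp)+
    then show ?thesis by linarith
  qed
  also have "\<dots> = M * (v - u) * (g v - g u)" by (simp add: algebra_simps)
  finally show ?thesis .
qed

lemma mono_on_times_continuous_integrable:
  fixes g y' :: "real \<Rightarrow> real"
  assumes g: "mono_on {a..b} g" and c: "continuous_on {a..b} y'"
  shows "(\<lambda>s. g s * y' s) integrable_on {a..b}"
proof (cases "a \<le> b")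
  case True
  have "g \<in> borel_measurable (lebesgue_on {a..b})"
    by (rule borel_measurable_integrable[OF integrable_mono_on[OF g]])
  moreover have "bounded (g ` {a..b})"
    by (rule bounded_subset[OF bounded_closed_interval, of _ "g a" "g b"])
       (use True in \<open>auto intro!: mono_onD[OF g]\<close>)
  ultimately have "(\<lambda>s. g s * y' s) absolutely_integrable_on {a..b}"
    by (intro absolutely_integrable_bounded_measurable_product_real
          absolutely_integrable_continuous_real[OF c]) simp_all
  then show ?thesis unfolding absolutely_integrable_on_def by blast
qed auto

lemma sum_partition_telescope:
  fixes F :: "real \<Rightarrow> 'a::ab_group_add"
  assumes "ts \<in> partitions a b"
  shows "(\<Sum>i < length ts - 1. F (ts ! Suc i) - F (ts ! i)) = F b - F a"
  using sum_lessThan_telescope[of "\<lambda>i. F (ts ! i)" "length ts - 1"] partitions_first_last[OF assms]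
  by simp

lemma by_parts_minus_RS_sum:
  fixes g y h :: "real \<Rightarrow> real"
  assumes ts: "ts \<in> partitions a b" and h: "h integrable_on {a..b}"
  shows "y b * g b - y a * g a - integral {a..b} h - RS_sum y g ts \<xi>
    = (\<Sum>i < length ts - 1. y (ts ! Suc i) * g (ts ! Suc i) - y (ts ! i) * g (ts ! i)
         - integral {ts ! i..ts ! Suc i} h - y (\<xi> i) * (g (ts ! Suc i) - g (ts ! i)))"
proof -
  have cell: "integral {ts ! i..ts ! Suc i} h = integral {a..ts ! Suc i} h - integral {a..ts ! i} h"
    if "i < length ts - 1" for i
  proof -
    have le: "a \<le> ts ! i" "ts ! i \<le> ts ! Suc i" "ts ! Suc i \<le> b"
      using partitions_nth_bounds[OF ts, of i] partitions_nth_bounds[OF ts, of "Suc i"]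
        partitions_nth_le_Suc[OF ts that] that by auto
    then have "h integrable_on {a..ts ! Suc i}"
      by (intro integrable_on_subinterval[OF h]) auto
    from Henstock_Kurzweil_Integration.integral_combine[OF le(1,2) this]
    show ?thesis by linarith
  qed
  have "(\<Sum>i < length ts - 1. y (ts ! Suc i) * g (ts ! Suc i) - y (ts ! i) * g (ts ! i)
         - integral {ts ! i..ts ! Suc i} h - y (\<xi> i) * (g (ts ! Suc i) - g (ts ! i)))
      = (\<Sum>i < length ts - 1. y (ts ! Suc i) * g (ts ! Suc i) - y (ts ! i) * g (ts ! i))
        - (\<Sum>i < length ts - 1. integral {a..ts ! Suc i} h - integral {a..ts ! i} h) - RS_sum y g ts \<xi>"
    unfolding RS_sum_def sum_subtractf[symmetric] using cell by simp
  then show ?thesis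
    unfolding sum_partition_telescope[OF ts, of "\<lambda>t. y t * g t"]
      sum_partition_telescope[OF ts, of "\<lambda>t. integral {a..t} h"] by simp
qed

lemma abs_RS_sum_minus_by_parts_le:
  fixes g y y' :: "real \<Rightarrow> real"
  assumes g: "mono_on {a..b} g"
    and y: "\<And>t. t \<in> {a..b} \<Longrightarrow> (y has_real_derivative y' t) (at t within {a..b})"
    and M: "\<And>t. t \<in> {a..b} \<Longrightarrow> \<bar>y' t\<bar> \<le> M" and "M \<ge> 0"
    and gi: "(\<lambda>s. g s * y' s) integrable_on {a..b}"
    and ts: "ts \<in> partitions a b" and tag: "\<forall>i<length ts - 1. ts ! i \<le> \<xi> i \<and> \<xi> i \<le> ts ! Suc i"
  shows "\<bar>RS_sum y g ts \<xi> - (y b * g b - y a * g a - integral {a..b} (\<lambda>s. g s * y' s))\<bar>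
           \<le> M * mesh ts * (g b - g a)"
proof -
  define n where "n = length ts - 1"
  have cell: "a \<le> ts ! i" "ts ! Suc i \<le> b" "ts ! i \<le> ts ! Suc i" if "i < n" for i
    using partitions_nth_bounds[OF ts, of i] partitions_nth_bounds[OF ts, of "Suc i"]
      partitions_nth_le_Suc[OF ts, of i] that n_def by auto
  define D where "D i = y (ts ! Suc i) * g (ts ! Suc i) - y (ts ! i) * g (ts ! i)
     - integral {ts ! i..ts ! Suc i} (\<lambda>s. g s * y' s) - y (\<xi> i) * (g (ts ! Suc i) - g (ts ! i))" for i
  have "\<bar>RS_sum y g ts \<xi> - (y b * g b - y a * g a - integral {a..b} (\<lambda>s. g s * y' s))\<bar> = \<bar>\<Sum>i<n. D i\<bar>"
    using by_parts_minus_RS_sum[OF ts gi, where g = g and y = y and \<xi> = \<xi>] unfolding D_def n_def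
    by linarith
  also have "\<dots> \<le> (\<Sum>i<n. \<bar>D i\<bar>)" by (rule sum_abs)
  also have "\<dots> \<le> (\<Sum>i<n. M * mesh ts * (g (ts ! Suc i) - g (ts ! i)))"
  proof (rule sum_mono)
    fix i assume "i \<in> {..<n}"
    then have i: "i < n" by simp
    have "\<bar>D i\<bar> \<le> M * (ts ! Suc i - ts ! i) * (g (ts ! Suc i) - g (ts ! i))"
      unfolding D_def by (rule RS_cell_error_le[OF g y M gi]) (use cell[OF i] tag i n_def in auto)
    also have "\<dots> \<le> M * mesh ts * (g (ts ! Suc i) - g (ts ! i))"
      using \<open>M \<ge> 0\<close> cell[OF i] g nth_Suc_minus_nth_le_mesh[of i ts] i n_def
      by (intro mult_right_mono mult_left_mono) (auto intro: mono_onD)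
    finally show "\<bar>D i\<bar> \<le> M * mesh ts * (g (ts ! Suc i) - g (ts ! i))" .
  qed
  also have "\<dots> = M * mesh ts * (g b - g a)"
    unfolding sum_distrib_left[symmetric] n_def sum_partition_telescope[OF ts] ..
  finally show ?thesis .
qed

lemma has_RS_integral_by_parts:
  fixes g y y' :: "real \<Rightarrow> real"
  assumes g: "mono_on {a..b} g"
    and y: "\<And>t. t \<in> {a..b} \<Longrightarrow> (y has_real_derivative y' t) (at t within {a..b})"
    and c: "continuous_on {a..b} y'"
  shows "has_RS_integral y g a b (y b * g b - y a * g a - integral {a..b} (\<lambda>s. g s * y' s))"
  unfolding has_RS_integral_def
proof (intro allI impI)
  fix e :: real assume "e > 0"
  obtain M where "M > 0" and M: "\<And>t. t \<in> {a..b} \<Longrightarrow> \<bar>y' t\<bar> \<le> M"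
    using compact_continuous_image[OF c compact_Icc] unfolding compact_eq_bounded_closed bounded_pos
    by (auto simp: real_norm_def)
  define \<Delta> where "\<Delta> = \<bar>g b - g a\<bar>"
  have "e / (M * \<Delta> + 1) > 0" unfolding \<Delta>_def using \<open>e > 0\<close> \<open>M > 0\<close> by (simp add: add_nonneg_pos)
  moreover have "\<bar>RS_sum y g ts \<xi> - (y b * g b - y a * g a - integral {a..b} (\<lambda>s. g s * y' s))\<bar> < e"
    if ts: "ts \<in> partitions a b" "mesh ts < e / (M * \<Delta> + 1)"
      and tag: "\<forall>i<length ts - 1. ts ! i \<le> \<xi> i \<and> \<xi> i \<le> ts ! Suc i" for ts \<xi>
  proof -
    have "0 \<le> M * \<Delta>" unfolding \<Delta>_def using \<open>M > 0\<close> by simp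
    have "\<bar>RS_sum y g ts \<xi> - (y b * g b - y a * g a - integral {a..b} (\<lambda>s. g s * y' s))\<bar>
        \<le> M * mesh ts * (g b - g a)"
      using abs_RS_sum_minus_by_parts_le[OF g y M _ mono_on_times_continuous_integrable[OF g c] ts(1) tag]
        \<open>M > 0\<close> by simp
    also have "\<dots> \<le> M * mesh ts * \<Delta>"
      unfolding \<Delta>_def using \<open>M > 0\<close> mesh_nonneg[of ts] by (intro mult_left_mono) auto
    also have "\<dots> \<le> M * (e / (M * \<Delta> + 1)) * \<Delta>"
      using ts(2) \<open>M > 0\<close> by (intro mult_right_mono mult_left_mono) (auto simp: \<Delta>_def)
    also have "\<dots> = e * (M * \<Delta>) / (M * \<Delta> + 1)" by simp
    also have "\<dots> < e" using \<open>e > 0\<close> \<open>0 \<le> M * \<Delta>\<close> by (simp add: divide_less_eq)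
    finally show ?thesis .
  qed
  ultimately show "\<exists>\<delta>>0. \<forall>ts\<in>partitions a b. \<forall>\<xi>. mesh ts < \<delta> \<longrightarrow>
        (\<forall>i<length ts - 1. ts ! i \<le> \<xi> i \<and> \<xi> i \<le> ts ! Suc i) \<longrightarrow>
        \<bar>RS_sum y g ts \<xi> - (y b * g b - y a * g a - integral {a..b} (\<lambda>s. g s * y' s))\<bar> < e"
    by blast
qed

lemma has_RS_integral_exists:
  assumes "bounded_variation_on g a b"
    and "\<And>t. t \<in> {a..b} \<Longrightarrow> (y has_real_derivative y' t) (at t within {a..b})"
    and "continuous_on {a..b} y'"
  shows "\<exists>I. has_RS_integral y g a b I"
proof -
  let ?V = "\<lambda>t. total_variation g a t"
  obtain I J where "has_RS_integral y ?V a b I" "has_RS_integral y (\<lambda>t. ?V t - g t) a b J"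
    using has_RS_integral_by_parts[OF mono_on_total_variation(1)[OF assms(1)] assms(2,3)]
      has_RS_integral_by_parts[OF mono_on_total_variation(2)[OF assms(1)] assms(2,3)] by blast
  from has_RS_integral_diff_integrator[OF this] show ?thesis by auto
qed

definition RS_integral :: "(real \<Rightarrow> real) \<Rightarrow> (real \<Rightarrow> real) \<Rightarrow> real \<Rightarrow> real \<Rightarrow> real" where
  "RS_integral x g a b = (THE I. has_RS_integral x g a b I)"

lemma has_RS_integral_RS_integral:
  assumes "bounded_variation_on g a b" "a \<le> b"
    and "\<And>t. t \<in> {a..b} \<Longrightarrow> (y has_real_derivative y' t) (at t within {a..b})"
    and "continuous_on {a..b} y'"
  shows "has_RS_integral y g a b (RS_integral y g a b)"
proof -
  obtain I where I: "has_RS_integral y g a b I" using has_RS_integral_exists[OF assms(1,3,4)] by blast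
  then have "RS_integral y g a b = I"
    unfolding RS_integral_def by (blast intro: has_RS_integral_unique[OF _ _ assms(2)])
  with I show ?thesis by simp
qed

lemma has_RS_integral_uniform_limit_value:
  assumes "bounded_variation_on g a b" "a \<le> b"
    and "\<And>n. has_RS_integral (y n) g a b (c n)" "c \<longlonglongrightarrow> c0"
    and "uniform_limit {a..b} y x sequentially"
    and "\<And>t. t \<in> {a..b} \<Longrightarrow> (x has_real_derivative x' t) (at t within {a..b})"
    and "continuous_on {a..b} x'"
  shows "has_RS_integral x g a b c0"
proof -
  have "has_RS_integral x g a b (RS_integral x g a b)"
    by (rule has_RS_integral_RS_integral[OF assms(1,2,6,7)])
  moreover from has_RS_integral_uniform_limit[OF assms(1,2,3) this assms(5)]
  have "c0 = RS_integral x g a b" using assms(4) by (rule LIMSEQ_unique[rotated])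
  ultimately show ?thesis by simp
qed

definition primitive :: "(real \<Rightarrow> real) \<Rightarrow> real \<Rightarrow> real" where
  "primitive g t = integral {0..t} g"

definition primitive2 :: "(real \<Rightarrow> real) \<Rightarrow> real \<Rightarrow> real" where
  "primitive2 g t = integral {0..t} (primitive g)"

lemma primitive2_0 [simp]: "primitive2 g 0 = 0"
  unfolding primitive2_def by simp

lemma abs_integral_le:
  fixes f :: "real \<Rightarrow> real"
  assumes "f integrable_on {a..b}" "a \<le> b" "\<And>s. s \<in> {a..b} \<Longrightarrow> \<bar>f s\<bar> \<le> M"
  shows "\<bar>integral {a..b} f\<bar> \<le> M * (b - a)"
proof -
  have "0 \<le> M" using assms(2) assms(3)[of a] by auto
  from has_integral_bound_real[OF this finite.emptyI integrable_integral[OF assms(1)]] assms(2,3)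
  show ?thesis by simp
qed

lemma has_real_derivative_primitive:
  "continuous_on {0..1} g \<Longrightarrow> t \<in> {0..1} \<Longrightarrow>
   (primitive g has_real_derivative g t) (at t within {0..1})"
  unfolding primitive_def[abs_def] by (rule integral_has_real_derivative)

lemma continuous_on_primitive:
  "continuous_on {0..1} g \<Longrightarrow> continuous_on {0..1} (primitive g)"
  by (rule DERIV_continuous_on[OF has_real_derivative_primitive])

lemma has_real_derivative_primitive2:
  "continuous_on {0..1} g \<Longrightarrow> t \<in> {0..1} \<Longrightarrow>
   (primitive2 g has_real_derivative primitive g t) (at t within {0..1})"
  unfolding primitive2_def[abs_def] by (rule integral_has_real_derivative[OF continuous_on_primitive])

lemma continuous_on_primitive2:
  "continuous_on {0..1} g \<Longrightarrow> continuous_on {0..1} (primitive2 g)"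
  by (rule DERIV_continuous_on[OF has_real_derivative_primitive2])

lemma integrable_on_unit_subinterval:
  fixes g :: "real \<Rightarrow> real"
  shows "continuous_on {0..1} g \<Longrightarrow> 0 \<le> u \<Longrightarrow> v \<le> 1 \<Longrightarrow> g integrable_on {u..v}"
  by (rule integrable_on_subinterval[OF integrable_continuous_interval]) auto

lemma abs_primitive_le:
  assumes "continuous_on {0..1} g" "t \<in> {0..1}" "\<And>s. s \<in> {0..1} \<Longrightarrow> \<bar>g s\<bar> \<le> M"
  shows "\<bar>primitive g t\<bar> \<le> M"
proof -
  have "\<bar>primitive g t\<bar> \<le> M * (t - 0)"
    unfolding primitive_def
    by (rule abs_integral_le[OF integrable_on_unit_subinterval[OF assms(1)]]) (use assms in auto)
  also have "\<dots> \<le> M" using assms(2) assms(3)[of 0] by (simp add: mult_left_le)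
  finally show ?thesis .
qed

lemma primitive2_lipschitz:
  assumes "continuous_on {0..1} g" "\<And>s. s \<in> {0..1} \<Longrightarrow> \<bar>g s\<bar> \<le> M"
  shows "M-lipschitz_on {0..1} (primitive2 g)"
proof -
  have "0 \<le> M" using assms(2)[of 0] by auto
  have "\<bar>primitive2 g v - primitive2 g u\<bar> \<le> M * (v - u)" if "0 \<le> u" "u \<le> v" "v \<le> 1" for u v
  proof -
    have pint: "primitive g integrable_on {0..v}"
      by (rule integrable_on_unit_subinterval[OF continuous_on_primitive[OF assms(1)]]) (use that in auto)
    have "primitive2 g v - primitive2 g u = integral {u..v} (primitive g)"
      using Henstock_Kurzweil_Integration.integral_combine[OF that(1,2) pint]
      unfolding primitive2_def by linarith
    also have "\<bar>\<dots>\<bar> \<le> M * (v - u)"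
      by (rule abs_integral_le integrable_on_unit_subinterval continuous_on_primitive assms(1)
          abs_primitive_le assms(2) | use that in auto)+
    finally show ?thesis .
  qed
  note ordered = this
  show ?thesis
  proof (rule lipschitz_onI[OF _ \<open>0 \<le> M\<close>])
    fix x y :: real assume "x \<in> {0..1}" "y \<in> {0..1}"
    then show "dist (primitive2 g x) (primitive2 g y) \<le> M * dist x y"
      using ordered[of x y] ordered[of y x] unfolding dist_real_def
      by (cases "x \<le> y") (auto simp: abs_minus_commute)
  qed
qed

lemma abs_primitive2_le:
  assumes "continuous_on {0..1} g" "t \<in> {0..1}" "\<And>s. s \<in> {0..1} \<Longrightarrow> \<bar>g s\<bar> \<le> M"
  shows "\<bar>primitive2 g t\<bar> \<le> M"
proof -
  have "\<bar>primitive2 g t - primitive2 g 0\<bar> \<le> M * \<bar>t - 0\<bar>"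
    using lipschitz_onD[OF primitive2_lipschitz[OF assms(1,3)] assms(2), of 0]
    by (simp add: dist_real_def)
  also have "\<dots> \<le> M" using assms(2) assms(3)[of 0] by (simp add: mult_left_le)
  finally show ?thesis by simp
qed

lemma primitive_diff:
  assumes "continuous_on {0..1} g" "continuous_on {0..1} h" "t \<in> {0..1}"
  shows "primitive g t - primitive h t = primitive (\<lambda>s. g s - h s) t"
  unfolding primitive_def
  by (rule integral_diff[symmetric]; rule integrable_on_unit_subinterval) (use assms in auto)

lemma primitive2_diff:
  assumes "continuous_on {0..1} g" "continuous_on {0..1} h" "t \<in> {0..1}"
  shows "primitive2 g t - primitive2 h t = primitive2 (\<lambda>s. g s - h s) t"
proof -
  have "primitive2 g t - primitive2 h t = integral {0..t} (\<lambda>s. primitive g s - primitive h s)"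
    unfolding primitive2_def
    by (rule integral_diff[symmetric];
        rule integrable_on_unit_subinterval[OF continuous_on_primitive]) (use assms in auto)
  also have "\<dots> = primitive2 (\<lambda>s. g s - h s) t"
    unfolding primitive2_def by (rule integral_cong) (use primitive_diff[OF assms(1,2)] assms(3) in auto)
  finally show ?thesis .
qed

lemma primitive2_cong:
  assumes "\<And>s. s \<in> {0..t} \<Longrightarrow> g s = h s"
  shows "primitive2 g t = primitive2 h t"
proof -
  have "primitive g r = primitive h r" if "r \<in> {0..t}" for r
    unfolding primitive_def by (rule integral_cong) (use assms that in auto)
  then show ?thesis unfolding primitive2_def by (rule integral_cong)
qed

section \<open>Truncation of the nonlinearity\<close>

text \<open>For the admissible \<open>\<lambda>\<close> all functions constructed below are bounded by 2, so f may be
  altered outside the strip \<open>\<bar>z\<bar> \<le> 2\<close> without affecting the problem.\<close>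

definition clip :: "real \<Rightarrow> real" where
  "clip z = max (-2) (min 2 z)"

definition truncated :: "(real \<Rightarrow> real \<Rightarrow> real) \<Rightarrow> real \<Rightarrow> real \<Rightarrow> real" where
  "truncated f s z = f s (clip z)"

lemma clip_range: "clip z \<in> {-2..2}"
  unfolding clip_def by auto

lemma abs_clip_diff_le: "\<bar>clip z - clip w\<bar> \<le> \<bar>z - w\<bar>"
  unfolding clip_def by auto

lemma clip_eq_self: "\<bar>z\<bar> \<le> 2 \<Longrightarrow> clip z = z"
  unfolding clip_def by auto

lemma continuous_on_clip [continuous_intros]:
  "continuous_on S u \<Longrightarrow> continuous_on S (\<lambda>s. clip (u s))"
  unfolding clip_def by (intro continuous_intros)

context
  fixes f :: "real \<Rightarrow> real \<Rightarrow> real"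
  assumes f_cont: "continuous_on ({0..1} \<times> UNIV) (\<lambda>(t, y). f t y)"
begin

lemma continuous_on_strip: "continuous_on ({0..1} \<times> {-2..2}) (\<lambda>(t, y). f t y)"
  by (rule continuous_on_subset[OF f_cont]) auto

lemma truncated_bounded:
  obtains C where "C > 0" "\<And>s z. s \<in> {0..1} \<Longrightarrow> \<bar>truncated f s z\<bar> \<le> C"
proof -
  have "compact ((\<lambda>(t, y). f t y) ` ({0..1} \<times> {-2..2::real}))"
    by (intro compact_continuous_image compact_Times continuous_on_strip) auto
  then obtain C where "C > 0" "\<forall>s\<in>{0..1}. \<forall>y\<in>{-2..2::real}. \<bar>f s y\<bar> \<le> C"
    unfolding compact_eq_bounded_closed bounded_pos by auto
  with that clip_range show ?thesis unfolding truncated_def by blast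
qed

lemma truncated_uniformly_continuous:
  assumes "e > 0"
  obtains d where "d > 0"
    "\<And>s z w. s \<in> {0..1} \<Longrightarrow> \<bar>z - w\<bar> < d \<Longrightarrow> \<bar>truncated f s z - truncated f s w\<bar> < e"
proof -
  have "uniformly_continuous_on ({0..1} \<times> {-2..2::real}) (\<lambda>(t, y). f t y)"
    by (intro compact_uniformly_continuous compact_Times continuous_on_strip) auto
  then obtain d where "d > 0" and d: "\<And>x x'. x \<in> {0..1} \<times> {-2..2::real} \<Longrightarrow> x' \<in> {0..1} \<times> {-2..2} \<Longrightarrow>
      dist x' x < d \<Longrightarrow> dist ((\<lambda>(t, y). f t y) x') ((\<lambda>(t, y). f t y) x) < e"
    unfolding uniformly_continuous_on_def using assms by metis
  show ?thesis
  proof (rule that[OF \<open>d > 0\<close>])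
    fix s z w assume "s \<in> {0..1::real}" "\<bar>z - w\<bar> < d"
    moreover have "dist (s, clip z) (s, clip w) = \<bar>clip z - clip w\<bar>"
      by (simp add: dist_Pair_Pair dist_real_def)
    ultimately show "\<bar>truncated f s z - truncated f s w\<bar> < e"
      using d[of "(s, clip w)" "(s, clip z)"] abs_clip_diff_le[of z w] clip_range[of z] clip_range[of w]
      unfolding truncated_def by (simp add: dist_real_def)
  qed
qed

lemma continuous_on_truncated:
  "continuous_on {0..1} u \<Longrightarrow> continuous_on {0..1} (\<lambda>s. truncated f s (u s))"
  unfolding truncated_def
  by (rule continuous_on_compose2[OF f_cont, of _ "\<lambda>s. (s, clip (u s))", simplified])
     (auto intro!: continuous_intros)

end

section \<open>The delay approximation\<close>

text \<open>Delaying the argument of the nonlinearity by d makes the integral equation solvable by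
  steps: on \<open>[0, k d]\<close> the solution is already reached after k iterations of the integral
  operator, so no fixed-point theorem in function space is needed.\<close>

definition delay_rhs :: "(real \<Rightarrow> real \<Rightarrow> real) \<Rightarrow> real \<Rightarrow> real \<Rightarrow> (real \<Rightarrow> real) \<Rightarrow> real \<Rightarrow> real" where
  "delay_rhs f lam d y s = - lam * truncated f s (y (max 0 (s - d)))"

definition delay_map ::
  "(real \<Rightarrow> real \<Rightarrow> real) \<Rightarrow> real \<Rightarrow> real \<Rightarrow> real \<times> real \<Rightarrow> (real \<Rightarrow> real) \<Rightarrow> real \<Rightarrow> real" where
  "delay_map f lam d p y t = fst p + snd p * t + primitive2 (delay_rhs f lam d y) t"

definition delay_iterate ::
  "(real \<Rightarrow> real \<Rightarrow> real) \<Rightarrow> real \<Rightarrow> real \<Rightarrow> real \<times> real \<Rightarrow> nat \<Rightarrow> real \<Rightarrow> real" where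
  "delay_iterate f lam d p k = (delay_map f lam d p ^^ k) (\<lambda>t. fst p)"

definition delay_steps :: "real \<Rightarrow> nat" where
  "delay_steps d = nat \<lceil>1 / d\<rceil>"

definition delay_solution ::
  "(real \<Rightarrow> real \<Rightarrow> real) \<Rightarrow> real \<Rightarrow> real \<Rightarrow> real \<times> real \<Rightarrow> real \<Rightarrow> real" where
  "delay_solution f lam d p = delay_iterate f lam d p (Suc (delay_steps d))"

lemma delay_iterate_Suc: "delay_iterate f lam d p (Suc k) = delay_map f lam d p (delay_iterate f lam d p k)"
  unfolding delay_iterate_def by simp

lemma truncated_bound_nonneg:
  "(\<And>s z. s \<in> {0..1} \<Longrightarrow> \<bar>truncated f s z\<bar> \<le> C) \<Longrightarrow> C \<ge> 0"
  using abs_ge_zero[of "truncated f 0 0"] by fastforce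

lemma abs_delay_rhs_le:
  "(\<And>s z. s \<in> {0..1} \<Longrightarrow> \<bar>truncated f s z\<bar> \<le> C) \<Longrightarrow> s \<in> {0..1} \<Longrightarrow>
   \<bar>delay_rhs f lam d y s\<bar> \<le> \<bar>lam\<bar> * C"
  unfolding delay_rhs_def by (simp add: abs_mult mult_left_mono)

context
  fixes f :: "real \<Rightarrow> real \<Rightarrow> real" and lam d :: real
  assumes f_cont: "continuous_on ({0..1} \<times> UNIV) (\<lambda>(t, y). f t y)" and d_pos: "d > 0"
begin

lemma continuous_on_delay_rhs:
  assumes "continuous_on {0..1} y"
  shows "continuous_on {0..1} (delay_rhs f lam d y)"
proof -
  have "continuous_on {0..1} (\<lambda>s. y (max 0 (s - d)))"
    by (rule continuous_on_compose2[OF assms]) (use d_pos in \<open>auto intro!: continuous_intros\<close>)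
  then show ?thesis
    unfolding delay_rhs_def by (intro continuous_intros continuous_on_truncated[OF f_cont])
qed

lemma continuous_on_delay_map:
  "continuous_on {0..1} y \<Longrightarrow> continuous_on {0..1} (delay_map f lam d p y)"
  unfolding delay_map_def by (intro continuous_intros continuous_on_primitive2 continuous_on_delay_rhs)

lemma has_real_derivative_delay_map:
  assumes "continuous_on {0..1} y" "t \<in> {0..1}"
  shows "(delay_map f lam d p y has_real_derivative snd p + primitive (delay_rhs f lam d y) t)
           (at t within {0..1})"
  unfolding delay_map_def
  by (rule derivative_eq_intros has_real_derivative_primitive2
        continuous_on_delay_rhs assms | simp)+

lemma delay_map_cong:
  assumes "r \<ge> 0" "\<And>s. s \<in> {0..1} \<Longrightarrow> s \<le> r \<Longrightarrow> y s = y' s" "t \<in> {0..1}" "t \<le> r + d"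
  shows "delay_map f lam d p y t = delay_map f lam d p y' t"
proof -
  have "delay_rhs f lam d y s = delay_rhs f lam d y' s" if "s \<in> {0..t}" for s
    unfolding delay_rhs_def using assms that d_pos by simp
  then show ?thesis unfolding delay_map_def by (metis primitive2_cong)
qed

lemma continuous_on_delay_iterate: "continuous_on {0..1} (delay_iterate f lam d p k)"
  by (induction k) (auto simp: delay_iterate_Suc delay_iterate_def[of _ _ _ _ 0]
      intro: continuous_on_delay_map continuous_intros)

lemma delay_iterate_stable:
  "t \<in> {0..1} \<Longrightarrow> t \<le> real k * d \<Longrightarrow> delay_iterate f lam d p (Suc k) t = delay_iterate f lam d p k t"
proof (induction k arbitrary: t)
  case 0
  then show ?case by (simp add: delay_iterate_def delay_map_def)
next
  case (Suc k)
  show ?case unfolding delay_iterate_Suc[of _ _ _ _ "Suc k"] delay_iterate_Suc[of _ _ _ _ k]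
    by (rule delay_map_cong[of "real k * d"]) (use Suc d_pos in \<open>auto simp: algebra_simps delay_iterate_Suc\<close>)
qed

lemma delay_solution_fixed_point:
  assumes "t \<in> {0..1}"
  shows "delay_solution f lam d p t = delay_map f lam d p (delay_solution f lam d p) t"
proof -
  have "1 / d \<le> real (delay_steps d)" unfolding delay_steps_def by linarith
  then have "1 \<le> real (delay_steps d) * d" using d_pos by (simp add: divide_le_eq)
  then have "t \<le> real (Suc (delay_steps d)) * d" using assms d_pos by (simp add: algebra_simps)
  from delay_iterate_stable[OF assms this] show ?thesis
    unfolding delay_solution_def by (simp add: delay_iterate_Suc)
qed

lemma delay_solution_eq:
  "t \<in> {0..1} \<Longrightarrow> delay_solution f lam d p t
     = fst p + snd p * t + primitive2 (delay_rhs f lam d (delay_solution f lam d p)) t"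
  using delay_solution_fixed_point unfolding delay_map_def by simp

lemma continuous_on_delay_solution: "continuous_on {0..1} (delay_solution f lam d p)"
  unfolding delay_solution_def by (rule continuous_on_delay_iterate)

lemma abs_delay_map_diff_le:
  assumes "continuous_on {0..1} y" "continuous_on {0..1} z" "t \<in> {0..1}"
    and "\<And>s. s \<in> {0..1} \<Longrightarrow> \<bar>delay_rhs f lam d y s - delay_rhs f lam d z s\<bar> \<le> \<epsilon>"
  shows "\<bar>delay_map f lam d p y t - delay_map f lam d q z t\<bar> \<le> \<bar>fst p - fst q\<bar> + \<bar>snd p - snd q\<bar> + \<epsilon>"
proof -
  have "\<bar>primitive2 (delay_rhs f lam d y) t - primitive2 (delay_rhs f lam d z) t\<bar> \<le> \<epsilon>"
    unfolding primitive2_diff[OF continuous_on_delay_rhs[OF assms(1)] continuous_on_delay_rhs[OF assms(2)] assms(3)]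
    by (intro abs_primitive2_le continuous_intros continuous_on_delay_rhs assms)
  moreover have "\<bar>snd p * t - snd q * t\<bar> \<le> \<bar>snd p - snd q\<bar>"
    using assms(3) by (simp add: left_diff_distrib[symmetric] abs_mult mult_left_le)
  ultimately show ?thesis unfolding delay_map_def by linarith
qed

lemma delay_iterate_continuous_in_param:
  "e > 0 \<Longrightarrow> \<exists>\<eta>>0. \<forall>p q. dist p q < \<eta> \<longrightarrow>
     (\<forall>t\<in>{0..1}. \<bar>delay_iterate f lam d p k t - delay_iterate f lam d q k t\<bar> < e)"
proof (induction k arbitrary: e)
  case 0
  have "\<bar>fst p - fst q\<bar> < e" if "dist p q < e" for p q :: "real \<times> real"
    using dist_fst_le[of p q] that by (simp add: dist_real_def)
  with 0 show ?case by (auto simp: delay_iterate_def)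
next
  case (Suc k)
  define e' where "e' = e / (2 * (\<bar>lam\<bar> + 1))"
  have "e' > 0" using Suc.prems unfolding e'_def by simp
  obtain \<delta> where "\<delta> > 0"
    and \<delta>: "\<And>s z w. s \<in> {0..1} \<Longrightarrow> \<bar>z - w\<bar> < \<delta> \<Longrightarrow> \<bar>truncated f s z - truncated f s w\<bar> < e'"
    using truncated_uniformly_continuous[OF f_cont \<open>e' > 0\<close>] by blast
  obtain \<eta> where "\<eta> > 0" and \<eta>: "\<forall>p q. dist p q < \<eta> \<longrightarrow>
      (\<forall>t\<in>{0..1}. \<bar>delay_iterate f lam d p k t - delay_iterate f lam d q k t\<bar> < \<delta>)"
    using Suc.IH[OF \<open>\<delta> > 0\<close>] by blast
  show ?case
  proof (intro exI[of _ "min \<eta> (e/4)"] conjI allI impI ballI)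
    fix p q :: "real \<times> real" and t :: real assume pq: "dist p q < min \<eta> (e/4)" and t: "t \<in> {0..1}"
    let ?y = "delay_iterate f lam d p k" and ?z = "delay_iterate f lam d q k"
    have "\<bar>delay_rhs f lam d ?y s - delay_rhs f lam d ?z s\<bar> \<le> \<bar>lam\<bar> * e'" if "s \<in> {0..1}" for s
    proof -
      have "max 0 (s - d) \<in> {0..1}" using that d_pos by auto
      moreover have "dist p q < \<eta>" using pq by simp
      ultimately have "\<bar>?y (max 0 (s - d)) - ?z (max 0 (s - d))\<bar> < \<delta>" using \<eta> by blast
      with \<delta>[OF that] have "\<bar>truncated f s (?y (max 0 (s - d))) - truncated f s (?z (max 0 (s - d)))\<bar> < e'" .
      then show ?thesis unfolding delay_rhs_def
        by (simp add: abs_mult right_diff_distrib[symmetric] mult_left_mono)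
    qed
    from abs_delay_map_diff_le[OF continuous_on_delay_iterate continuous_on_delay_iterate t this]
    have "\<bar>delay_iterate f lam d p (Suc k) t - delay_iterate f lam d q (Suc k) t\<bar>
        \<le> \<bar>fst p - fst q\<bar> + \<bar>snd p - snd q\<bar> + \<bar>lam\<bar> * e'"
      unfolding delay_iterate_Suc .
    moreover have "\<bar>fst p - fst q\<bar> < e/4" "\<bar>snd p - snd q\<bar> < e/4"
      using dist_fst_le[of p q] dist_snd_le[of p q] pq by (simp_all add: dist_real_def)
    moreover have "\<bar>lam\<bar> * e' < e / 2"
      using Suc.prems unfolding e'_def by (simp add: field_simps)
    ultimately show "\<bar>delay_iterate f lam d p (Suc k) t - delay_iterate f lam d q (Suc k) t\<bar> < e"
      by linarith
  qed (use \<open>\<eta> > 0\<close> Suc.prems in auto)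
qed

lemma delay_solution_continuous_in_param:
  "e > 0 \<Longrightarrow> \<exists>\<eta>>0. \<forall>p q. dist p q < \<eta> \<longrightarrow>
     (\<forall>t\<in>{0..1}. \<bar>delay_solution f lam d p t - delay_solution f lam d q t\<bar> < e)"
  unfolding delay_solution_def by (rule delay_iterate_continuous_in_param)

lemma has_real_derivative_delay_solution:
  "t \<in> {0..1} \<Longrightarrow> (delay_solution f lam d p has_real_derivative
     snd p + primitive (delay_rhs f lam d (delay_iterate f lam d p (delay_steps d))) t) (at t within {0..1})"
  unfolding delay_solution_def delay_iterate_Suc
  by (intro has_real_derivative_delay_map continuous_on_delay_iterate)

lemma delay_solution_has_RS_integral:
  "bounded_variation_on g 0 1 \<Longrightarrow>
   has_RS_integral (delay_solution f lam d p) g 0 1 (RS_integral (delay_solution f lam d p) g 0 1)"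
  by (rule has_RS_integral_RS_integral[OF _ _ has_real_derivative_delay_solution])
     (auto intro!: continuous_intros continuous_on_primitive continuous_on_delay_rhs
        continuous_on_delay_iterate)

end

section \<open>Shooting for the boundary conditions\<close>

definition l1_unit_ball :: "(real \<times> real) set" where
  "l1_unit_ball = {p. \<bar>fst p\<bar> + \<bar>snd p\<bar> \<le> 1}"

lemma dist_le_l1: "dist p q \<le> \<bar>fst p - fst q\<bar> + \<bar>snd p - snd q\<bar>"
  unfolding dist_prod_def dist_real_def using sqrt_sum_squares_le_sum_abs by simp

lemma compact_l1_unit_ball: "compact l1_unit_ball"
proof -
  have "closed l1_unit_ball" unfolding l1_unit_ball_def
    by (intro closed_Collect_le continuous_intros)
  moreover have "bounded l1_unit_ball"
    unfolding bounded_iff l1_unit_ball_def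
  proof (intro exI[of _ 1] ballI)
    fix x :: "real \<times> real" assume "x \<in> {p. \<bar>fst p\<bar> + \<bar>snd p\<bar> \<le> 1}"
    then show "norm x \<le> 1" using dist_le_l1[of x 0] by (simp add: dist_norm)
  qed
  ultimately show ?thesis by (simp add: compact_eq_bounded_closed)
qed

lemma convex_l1_unit_ball: "convex l1_unit_ball"
proof (rule convexI)
  fix x y :: "real \<times> real" and u v :: real
  assume "x \<in> l1_unit_ball" "y \<in> l1_unit_ball" and uv: "0 \<le> u" "0 \<le> v" "u + v = 1"
  have "\<bar>u * fst x + v * fst y\<bar> + \<bar>u * snd x + v * snd y\<bar>
      \<le> u * (\<bar>fst x\<bar> + \<bar>snd x\<bar>) + v * (\<bar>fst y\<bar> + \<bar>snd y\<bar>)"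
    using uv abs_triangle_ineq[of "u * fst x" "v * fst y"] abs_triangle_ineq[of "u * snd x" "v * snd y"]
    by (simp add: abs_mult algebra_simps)
  also have "\<dots> \<le> u * 1 + v * 1"
    using \<open>x \<in> l1_unit_ball\<close> \<open>y \<in> l1_unit_ball\<close> uv unfolding l1_unit_ball_def
    by (intro add_mono mult_left_mono) auto
  finally show "u *\<^sub>R x + v *\<^sub>R y \<in> l1_unit_ball"
    unfolding l1_unit_ball_def using uv by simp
qed

text \<open>p is a fixed point iff the delay solution starting with value \<open>fst p\<close> and slope
  \<open>snd p\<close> satisfies both boundary conditions.\<close>

definition boundary_map ::
  "(real \<Rightarrow> real \<Rightarrow> real) \<Rightarrow> real \<Rightarrow> real \<Rightarrow> (real \<Rightarrow> real) \<Rightarrow> (real \<Rightarrow> real) \<Rightarrow> real \<times> real \<Rightarrow> real \<times> real"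
where
  "boundary_map f lam d A B p =
     (let y = delay_solution f lam d p
      in (RS_integral y A 0 1, RS_integral y B 0 1 - y 1 + fst p + snd p - RS_integral y A 0 1))"

context
  fixes f :: "real \<Rightarrow> real \<Rightarrow> real" and A B :: "real \<Rightarrow> real" and lam d :: real
  assumes f_cont: "continuous_on ({0..1} \<times> UNIV) (\<lambda>(t, y). f t y)"
    and bvA: "bounded_variation_on A 0 1" and bvB: "bounded_variation_on B 0 1"
    and d_pos: "d > 0"
begin

lemma dist_boundary_map_le:
  assumes "\<And>t. t \<in> {0..1} \<Longrightarrow> \<bar>delay_solution f lam d q t - delay_solution f lam d p t\<bar> \<le> \<epsilon>"
  shows "dist (boundary_map f lam d A B q) (boundary_map f lam d A B p)
    \<le> (total_variation A 0 1 + total_variation (\<lambda>s. A s - B s) 0 1 + 1) * \<epsilon>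
       + \<bar>fst q - fst p\<bar> + \<bar>snd q - snd p\<bar>"
proof -
  let ?y = "delay_solution f lam d p" and ?z = "delay_solution f lam d q"
  note h = delay_solution_has_RS_integral[OF f_cont d_pos]
  have "\<bar>RS_integral ?z A 0 1 - RS_integral ?y A 0 1\<bar> \<le> \<epsilon> * total_variation A 0 1"
    by (rule has_RS_integral_diff_bound[OF h[OF bvA] h[OF bvA] bvA _ assms]) simp
  moreover have "\<bar>(RS_integral ?z A 0 1 - RS_integral ?z B 0 1) - (RS_integral ?y A 0 1 - RS_integral ?y B 0 1)\<bar>
      \<le> \<epsilon> * total_variation (\<lambda>s. A s - B s) 0 1"
    by (rule has_RS_integral_diff_bound[OF has_RS_integral_diff_integrator[OF h[OF bvA] h[OF bvB]]
          has_RS_integral_diff_integrator[OF h[OF bvA] h[OF bvB]] bounded_variation_on_diff[OF bvA bvB] _ assms])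
       simp
  moreover have "\<bar>?z 1 - ?y 1\<bar> \<le> \<epsilon>" using assms[of 1] by simp
  moreover have "fst (boundary_map f lam d A B q) - fst (boundary_map f lam d A B p)
      = RS_integral ?z A 0 1 - RS_integral ?y A 0 1"
    "snd (boundary_map f lam d A B q) - snd (boundary_map f lam d A B p)
      = - ((RS_integral ?z A 0 1 - RS_integral ?z B 0 1) - (RS_integral ?y A 0 1 - RS_integral ?y B 0 1))
        - (?z 1 - ?y 1) + (fst q - fst p) + (snd q - snd p)"
    unfolding boundary_map_def Let_def by simp_all
  ultimately have "\<bar>fst (boundary_map f lam d A B q) - fst (boundary_map f lam d A B p)\<bar>
      + \<bar>snd (boundary_map f lam d A B q) - snd (boundary_map f lam d A B p)\<bar>
      \<le> \<epsilon> * total_variation A 0 1 + \<epsilon> * total_variation (\<lambda>s. A s - B s) 0 1 + \<epsilon>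
         + \<bar>fst q - fst p\<bar> + \<bar>snd q - snd p\<bar>"
    by (simp only:)
  then show ?thesis
    using dist_le_l1[of "boundary_map f lam d A B q" "boundary_map f lam d A B p"]
    by (simp add: algebra_simps)
qed

lemma continuous_on_boundary_map: "continuous_on UNIV (boundary_map f lam d A B)"
  unfolding continuous_on_iff
proof (intro ballI allI impI)
  fix p :: "real \<times> real" and e :: real assume "e > 0"
  define V where "V = total_variation A 0 1 + total_variation (\<lambda>s. A s - B s) 0 1"
  have "V \<ge> 0" unfolding V_def
    using bvA bvB by (intro add_nonneg_nonneg total_variation_nonneg bounded_variation_on_diff) simp_all
  define \<epsilon> where "\<epsilon> = e / (2 * (V + 2))"
  have "\<epsilon> > 0" unfolding \<epsilon>_def using \<open>e > 0\<close> \<open>V \<ge> 0\<close> by simp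
  obtain \<eta> where "\<eta> > 0" and \<eta>: "\<forall>p q. dist p q < \<eta> \<longrightarrow>
      (\<forall>t\<in>{0..1}. \<bar>delay_solution f lam d p t - delay_solution f lam d q t\<bar> < \<epsilon>)"
    using delay_solution_continuous_in_param[OF f_cont d_pos \<open>\<epsilon> > 0\<close>] by blast
  have "dist (boundary_map f lam d A B q) (boundary_map f lam d A B p) < e"
    if dq: "dist q p < min \<eta> (e / 8)" for q
  proof -
    have "dist (boundary_map f lam d A B q) (boundary_map f lam d A B p)
        \<le> (V + 1) * \<epsilon> + \<bar>fst q - fst p\<bar> + \<bar>snd q - snd p\<bar>"
      unfolding V_def
      by (rule dist_boundary_map_le) (use \<eta>[rule_format, of q p] dq in \<open>auto intro: less_imp_le\<close>)
    moreover have "\<bar>fst q - fst p\<bar> < e / 8" "\<bar>snd q - snd p\<bar> < e / 8"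
      using dist_fst_le[of q p] dist_snd_le[of q p] dq by (simp_all add: dist_real_def)
    moreover have "(V + 1) * \<epsilon> < e / 2"
      unfolding \<epsilon>_def using \<open>e > 0\<close> \<open>V \<ge> 0\<close> by (simp add: field_simps)
    ultimately show ?thesis by linarith
  qed
  then show "\<exists>\<eta>>0. \<forall>q\<in>UNIV. dist q p < \<eta> \<longrightarrow> dist (boundary_map f lam d A B q) (boundary_map f lam d A B p) < e"
    using \<open>\<eta> > 0\<close> \<open>e > 0\<close> by (intro exI[of _ "min \<eta> (e / 8)"]) auto
qed

context
  fixes C :: real
  assumes C: "\<And>s z. s \<in> {0..1} \<Longrightarrow> \<bar>truncated f s z\<bar> \<le> C"
    and small: "2 * \<bar>lam\<bar> * C \<le> 1 - (total_variation A 0 1 + total_variation (\<lambda>s. A s - B s) 0 1)"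
begin

lemma abs_primitive2_delay_rhs_le:
  "continuous_on {0..1} y \<Longrightarrow> t \<in> {0..1} \<Longrightarrow> \<bar>primitive2 (delay_rhs f lam d y) t\<bar> \<le> \<bar>lam\<bar> * C"
  by (intro abs_primitive2_le continuous_on_delay_rhs[OF f_cont d_pos] abs_delay_rhs_le C)

lemma abs_delay_solution_le:
  assumes "t \<in> {0..1}"
  shows "\<bar>delay_solution f lam d p t\<bar> \<le> \<bar>fst p\<bar> + \<bar>snd p\<bar> + \<bar>lam\<bar> * C"
proof -
  have "\<bar>snd p * t\<bar> \<le> \<bar>snd p\<bar>" using assms by (simp add: abs_mult mult_left_le)
  with delay_solution_eq[OF f_cont d_pos assms, where lam = lam and p = p]
    abs_primitive2_delay_rhs_le[OF continuous_on_delay_solution[OF f_cont d_pos, of lam p] assms]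
  show ?thesis by linarith
qed

lemma delay_solution_lipschitz:
  "(\<bar>snd p\<bar> + \<bar>lam\<bar> * C)-lipschitz_on {0..1} (delay_solution f lam d p)"
proof -
  let ?y = "delay_solution f lam d p"
  have "\<bar>snd p\<bar>-lipschitz_on {0..1} (\<lambda>t. fst p + snd p * t)"
    using lipschitz_on_add[OF lipschitz_on_constant lipschitz_on_cmult_real[OF lipschitz_on_id]] by simp
  moreover have "(\<bar>lam\<bar> * C)-lipschitz_on {0..1} (primitive2 (delay_rhs f lam d ?y))"
    by (intro primitive2_lipschitz continuous_on_delay_rhs[OF f_cont d_pos]
        continuous_on_delay_solution[OF f_cont d_pos] abs_delay_rhs_le C)
  ultimately have "(\<bar>snd p\<bar> + \<bar>lam\<bar> * C)-lipschitz_on {0..1}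
      (\<lambda>t. fst p + snd p * t + primitive2 (delay_rhs f lam d ?y) t)"
    by (rule lipschitz_on_add)
  then show ?thesis
    by (rule lipschitz_on_transform) (simp add: delay_solution_eq[OF f_cont d_pos])
qed

lemma boundary_map_l1_unit_ball:
  assumes p: "p \<in> l1_unit_ball"
  shows "boundary_map f lam d A B p \<in> l1_unit_ball"
proof -
  let ?y = "delay_solution f lam d p"
  let ?V1 = "total_variation A 0 1" and ?V2 = "total_variation (\<lambda>s. A s - B s) 0 1"
  let ?M = "1 + \<bar>lam\<bar> * C"
  have M: "\<bar>?y t\<bar> \<le> ?M" if "t \<in> {0..1}" for t
    using abs_delay_solution_le[OF that, of p] p unfolding l1_unit_ball_def by simp
  have "C \<ge> 0" by (rule truncated_bound_nonneg) (rule C)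
  then have "?M \<ge> 0" by simp
  have hA: "has_RS_integral ?y A 0 1 (RS_integral ?y A 0 1)"
    and hB: "has_RS_integral ?y B 0 1 (RS_integral ?y B 0 1)"
    by (intro delay_solution_has_RS_integral[OF f_cont d_pos] bvA bvB)+
  let ?RA = "RS_integral ?y A 0 1" and ?RB = "RS_integral ?y B 0 1"
  have "\<bar>?RA\<bar> \<le> ?M * ?V1"
    by (rule has_RS_integral_bound[OF hA bvA _ M \<open>?M \<ge> 0\<close>]) simp
  moreover have "\<bar>?RA - ?RB\<bar> \<le> ?M * ?V2"
    by (rule has_RS_integral_bound[OF has_RS_integral_diff_integrator[OF hA hB] bounded_variation_on_diff[OF bvA bvB] _ M \<open>?M \<ge> 0\<close>]) simp
  moreover have "\<bar>?y 1 - fst p - snd p\<bar> \<le> \<bar>lam\<bar> * C"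
    using delay_solution_eq[OF f_cont d_pos, where lam = lam and p = p and t = 1]
      abs_primitive2_delay_rhs_le[OF continuous_on_delay_solution[OF f_cont d_pos, of lam p], of 1] by simp
  moreover have "?M * ?V1 + ?M * ?V2 + \<bar>lam\<bar> * C \<le> 1"
  proof -
    have "0 \<le> \<bar>lam\<bar> * C" using \<open>C \<ge> 0\<close> by simp
    then have "?V1 + ?V2 \<le> 1" using small by linarith
    then have "\<bar>lam\<bar> * C * (?V1 + ?V2) \<le> \<bar>lam\<bar> * C" using \<open>C \<ge> 0\<close> by (simp add: mult_left_le)
    moreover have "?M * ?V1 + ?M * ?V2 = (?V1 + ?V2) + \<bar>lam\<bar> * C * (?V1 + ?V2)"
      by (simp add: algebra_simps)
    ultimately show ?thesis using small by linarith
  qed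
  moreover have "fst (boundary_map f lam d A B p) = ?RA"
    "snd (boundary_map f lam d A B p) = - (?RA - ?RB) - (?y 1 - fst p - snd p)"
    unfolding boundary_map_def Let_def by simp_all
  ultimately show ?thesis unfolding l1_unit_ball_def mem_Collect_eq by linarith
qed

lemma delay_bvp_solution:
  obtains y b where
    "\<And>t. t \<in> {0..1} \<Longrightarrow> y t = y 0 + b * t + primitive2 (delay_rhs f lam d y) t"
    "\<And>t. t \<in> {0..1} \<Longrightarrow> \<bar>y t\<bar> \<le> 1 + \<bar>lam\<bar> * C"
    "(1 + \<bar>lam\<bar> * C)-lipschitz_on {0..1} y"
    "has_RS_integral y A 0 1 (y 0)" "has_RS_integral y B 0 1 (y 1)"
proof -
  obtain p where p: "p \<in> l1_unit_ball" "boundary_map f lam d A B p = p"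
  proof (rule brouwer[OF compact_l1_unit_ball convex_l1_unit_ball])
    have "(0, 0) \<in> l1_unit_ball" unfolding l1_unit_ball_def by simp
    then show "l1_unit_ball \<noteq> {}" by blast
    show "continuous_on l1_unit_ball (boundary_map f lam d A B)"
      by (rule continuous_on_subset[OF continuous_on_boundary_map subset_UNIV])
    show "boundary_map f lam d A B \<in> l1_unit_ball \<rightarrow> l1_unit_ball"
      using boundary_map_l1_unit_ball by blast
  qed
  let ?y = "delay_solution f lam d p"
  have eq: "?y t = fst p + snd p * t + primitive2 (delay_rhs f lam d ?y) t" if "t \<in> {0..1}" for t
    by (rule delay_solution_eq[OF f_cont d_pos that])
  have y0: "?y 0 = fst p" using eq[of 0] by simp
  have RS: "RS_integral ?y A 0 1 = ?y 0" "RS_integral ?y B 0 1 = ?y 1"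
    using p(2) y0 unfolding boundary_map_def Let_def by (auto simp: prod_eq_iff)
  have l1: "\<bar>fst p\<bar> + \<bar>snd p\<bar> \<le> 1" using p(1) unfolding l1_unit_ball_def by simp
  show ?thesis
  proof (rule that[of ?y "snd p"])
    show "?y t = ?y 0 + snd p * t + primitive2 (delay_rhs f lam d ?y) t" if "t \<in> {0..1}" for t
      using eq[OF that] y0 by simp
    show "\<bar>?y t\<bar> \<le> 1 + \<bar>lam\<bar> * C" if "t \<in> {0..1}" for t
      using abs_delay_solution_le[OF that, of p] l1 by simp
    show "(1 + \<bar>lam\<bar> * C)-lipschitz_on {0..1} ?y"
      by (rule lipschitz_on_mono[OF delay_solution_lipschitz]) (use l1 in auto)
    show "has_RS_integral ?y A 0 1 (?y 0)" "has_RS_integral ?y B 0 1 (?y 1)"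
      using delay_solution_has_RS_integral[OF f_cont d_pos bvA, of lam p]
        delay_solution_has_RS_integral[OF f_cont d_pos bvB, of lam p]
      unfolding RS by simp_all
  qed
qed

end

end

lemma delay_bvp_solutions:
  fixes d :: "nat \<Rightarrow> real"
  assumes f_cont: "continuous_on ({0..1} \<times> UNIV) (\<lambda>(t, y). f t y)"
    and bvA: "bounded_variation_on A 0 1" and bvB: "bounded_variation_on B 0 1"
    and C: "\<And>s z. s \<in> {0..1} \<Longrightarrow> \<bar>truncated f s z\<bar> \<le> C"
    and small: "2 * \<bar>lam\<bar> * C \<le> 1 - (total_variation A 0 1 + total_variation (\<lambda>s. A s - B s) 0 1)"
    and d_pos: "\<And>n. d n > 0"
  obtains y b where
    "\<And>n t. t \<in> {0..1} \<Longrightarrow> y n t = y n 0 + b n * t + primitive2 (delay_rhs f lam (d n) (y n)) t"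
    "\<And>n t. t \<in> {0..1} \<Longrightarrow> \<bar>y n t\<bar> \<le> 1 + \<bar>lam\<bar> * C"
    "\<And>n. (1 + \<bar>lam\<bar> * C)-lipschitz_on {0..1} (y n)"
    "\<And>n. has_RS_integral (y n) A 0 1 (y n 0)" "\<And>n. has_RS_integral (y n) B 0 1 (y n 1)"
proof -
  have "\<forall>n. \<exists>y b. (\<forall>t\<in>{0..1}. y t = y 0 + b * t + primitive2 (delay_rhs f lam (d n) y) t)
      \<and> (\<forall>t\<in>{0..1}. \<bar>y t\<bar> \<le> 1 + \<bar>lam\<bar> * C) \<and> (1 + \<bar>lam\<bar> * C)-lipschitz_on {0..1} y
      \<and> has_RS_integral y A 0 1 (y 0) \<and> has_RS_integral y B 0 1 (y 1)"
  proof
    fix n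
    obtain y b where "\<And>t. t \<in> {0..1} \<Longrightarrow> y t = y 0 + b * t + primitive2 (delay_rhs f lam (d n) y) t"
      "\<And>t. t \<in> {0..1} \<Longrightarrow> \<bar>y t\<bar> \<le> 1 + \<bar>lam\<bar> * C" "(1 + \<bar>lam\<bar> * C)-lipschitz_on {0..1} y"
      "has_RS_integral y A 0 1 (y 0)" "has_RS_integral y B 0 1 (y 1)"
      using delay_bvp_solution[OF f_cont bvA bvB d_pos C small] by metis
    then show "\<exists>y b. (\<forall>t\<in>{0..1}. y t = y 0 + b * t + primitive2 (delay_rhs f lam (d n) y) t)
      \<and> (\<forall>t\<in>{0..1}. \<bar>y t\<bar> \<le> 1 + \<bar>lam\<bar> * C) \<and> (1 + \<bar>lam\<bar> * C)-lipschitz_on {0..1} y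
      \<and> has_RS_integral y A 0 1 (y 0) \<and> has_RS_integral y B 0 1 (y 1)" by blast
  qed
  then show ?thesis using that by metis
qed

section \<open>Passing to the limit \<open>d \<rightarrow> 0\<close>\<close>

lemma lipschitz_bounded_uniformly_convergent_subseq:
  fixes y :: "nat \<Rightarrow> real \<Rightarrow> real"
  assumes "\<And>n t. t \<in> {a..b} \<Longrightarrow> \<bar>y n t\<bar> \<le> M" "\<And>n. L-lipschitz_on {a..b} (y n)"
  obtains r w where "strict_mono r" "uniform_limit {a..b} (\<lambda>n. y (r n)) w sequentially"
proof -
  have "L \<ge> 0" using lipschitz_on_nonneg[OF assms(2)] .
  obtain w r where "continuous_on {a..b} w" "strict_mono (r :: nat \<Rightarrow> nat)"
    and conv: "\<And>e. 0 < e \<Longrightarrow> \<exists>N. \<forall>n t. n \<ge> N \<and> t \<in> {a..b} \<longrightarrow> norm (y (r n) t - w t) < e"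
  proof (rule Arzela_Ascoli[of "{a..b}" y M])
    fix t e :: real assume "t \<in> {a..b}" "0 < e"
    show "\<exists>\<delta>>0. \<forall>n s. s \<in> {a..b} \<and> norm (t - s) < \<delta> \<longrightarrow> norm (y n t - y n s) < e"
    proof (intro exI[of _ "e / (L + 1)"] conjI allI impI)
      fix n s assume s: "s \<in> {a..b} \<and> norm (t - s) < e / (L + 1)"
      have "\<bar>y n t - y n s\<bar> \<le> L * \<bar>t - s\<bar>"
        using lipschitz_onD[OF assms(2) \<open>t \<in> {a..b}\<close>, of s n] s by (simp add: dist_real_def)
      also have "\<dots> \<le> (L + 1) * \<bar>t - s\<bar>" by (simp add: mult_right_mono)
      also have "\<dots> < e" using s \<open>L \<ge> 0\<close> by (simp add: field_simps)
      finally show "norm (y n t - y n s) < e" by simp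
    qed (use \<open>0 < e\<close> \<open>L \<ge> 0\<close> in simp)
  qed (use assms(1) in auto)
  moreover have "uniform_limit {a..b} (\<lambda>n. y (r n)) w sequentially"
    unfolding uniform_limit_sequentially_iff dist_real_def using conv by fastforce
  ultimately show ?thesis using that by blast
qed

lemma delay_rhs_uniform_limit:
  assumes f_cont: "continuous_on ({0..1} \<times> UNIV) (\<lambda>(t, y). f t y)"
    and d: "d \<longlonglongrightarrow> 0" "\<And>n. d n > 0"
    and lip: "\<And>n. L-lipschitz_on {0..1} (y n)"
    and conv: "uniform_limit {0..1} y w sequentially"
  shows "uniform_limit {0..1} (\<lambda>n. delay_rhs f lam (d n) (y n)) (\<lambda>s. - lam * truncated f s (w s))
           sequentially"
  unfolding uniform_limit_iff dist_real_def
proof (intro allI impI)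
  fix e :: real assume "e > 0"
  have "L \<ge> 0" using lipschitz_on_nonneg[OF lip] .
  obtain \<delta> where "\<delta> > 0"
    and \<delta>: "\<And>s z v. s \<in> {0..1} \<Longrightarrow> \<bar>z - v\<bar> < \<delta> \<Longrightarrow> \<bar>truncated f s z - truncated f s v\<bar> < e / (\<bar>lam\<bar> + 1)"
    using truncated_uniformly_continuous[OF f_cont, of "e / (\<bar>lam\<bar> + 1)"] \<open>e > 0\<close> by auto
  have "\<forall>\<^sub>F n in sequentially. \<forall>s\<in>{0..1}. \<bar>y n s - w s\<bar> < \<delta> / 2"
    using uniform_limitD[OF conv, of "\<delta> / 2"] \<open>\<delta> > 0\<close> by (simp add: dist_real_def)
  moreover have "\<forall>\<^sub>F n in sequentially. d n < \<delta> / (2 * (L + 1))"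
    using order_tendstoD(2)[OF d(1)] \<open>\<delta> > 0\<close> \<open>L \<ge> 0\<close> by simp
  ultimately show "\<forall>\<^sub>F n in sequentially. \<forall>s\<in>{0..1}.
      \<bar>delay_rhs f lam (d n) (y n) s - - lam * truncated f s (w s)\<bar> < e"
  proof eventually_elim
    case (elim n)
    show ?case
    proof
      fix s :: real assume s: "s \<in> {0..1}"
      let ?s = "max 0 (s - d n)"
      have "?s \<in> {0..1}" "\<bar>?s - s\<bar> \<le> d n" using s d(2)[of n] by auto
      then have "\<bar>y n ?s - y n s\<bar> \<le> L * d n"
        using lipschitz_onD[OF lip _ s, of ?s n] \<open>L \<ge> 0\<close> by (simp add: dist_real_def)
           (meson mult_left_mono order_trans)
      also have "\<dots> < \<delta> / 2"
        using elim \<open>L \<ge> 0\<close> \<open>\<delta> > 0\<close> d(2)[of n] by (simp add: field_simps)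
      moreover have "\<bar>y n s - w s\<bar> < \<delta> / 2" using elim s by blast
      ultimately have "\<bar>y n ?s - w s\<bar> < \<delta>" by linarith
      then have "\<bar>truncated f s (y n ?s) - truncated f s (w s)\<bar> < e / (\<bar>lam\<bar> + 1)"
        by (rule \<delta>[OF s])
      then have "\<bar>lam\<bar> * \<bar>truncated f s (y n ?s) - truncated f s (w s)\<bar> \<le> \<bar>lam\<bar> * (e / (\<bar>lam\<bar> + 1))"
        by (intro mult_left_mono) auto
      also have "\<dots> < e" using \<open>e > 0\<close> by (simp add: field_simps)
      finally show "\<bar>delay_rhs f lam (d n) (y n) s - - lam * truncated f s (w s)\<bar> < e"
        unfolding delay_rhs_def by (simp add: abs_mult[symmetric] algebra_simps)
    qed
  qed
qed

lemma primitive2_tendsto: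
  assumes "\<And>n. continuous_on {0..1} (g n)" "continuous_on {0..1} h"
    and "uniform_limit {0..1} g h sequentially" "t \<in> {0..1}"
  shows "(\<lambda>n. primitive2 (g n) t) \<longlonglongrightarrow> primitive2 h t"
  unfolding tendsto_iff dist_real_def
proof (intro allI impI)
  fix e :: real assume "e > 0"
  then have "\<forall>\<^sub>F n in sequentially. \<forall>s\<in>{0..1}. \<bar>g n s - h s\<bar> < e / 2"
    using uniform_limitD[OF assms(3), of "e / 2"] by (simp add: dist_real_def)
  then show "\<forall>\<^sub>F n in sequentially. \<bar>primitive2 (g n) t - primitive2 h t\<bar> < e"
  proof eventually_elim
    case (elim n)
    have "\<bar>primitive2 (g n) t - primitive2 h t\<bar> \<le> e / 2"
      unfolding primitive2_diff[OF assms(1,2,4)]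
      by (rule abs_primitive2_le) (use assms elim in \<open>auto intro!: continuous_intros less_imp_le\<close>)
    then show ?case using \<open>e > 0\<close> by simp
  qed
qed


lemma delay_limit_integral_equation:
  fixes y :: "nat \<Rightarrow> real \<Rightarrow> real" and b d :: "nat \<Rightarrow> real"
  assumes f_cont: "continuous_on ({0..1} \<times> UNIV) (\<lambda>(t, y). f t y)"
    and d: "d \<longlonglongrightarrow> 0" "\<And>n. d n > 0"
    and eq: "\<And>n t. t \<in> {0..1} \<Longrightarrow> y n t = y n 0 + b n * t + primitive2 (delay_rhs f lam (d n) (y n)) t"
    and lip: "\<And>n. L-lipschitz_on {0..1} (y n)"
    and conv: "uniform_limit {0..1} y w sequentially"
  obtains v where
    "\<And>t. t \<in> {0..1} \<Longrightarrow> w t = w 0 + v * t + primitive2 (\<lambda>s. - lam * truncated f s (w s)) t"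
proof -
  define g where "g n = delay_rhs f lam (d n) (y n)" for n
  define gw where "gw = (\<lambda>s. - lam * truncated f s (w s))"
  have y_cont: "continuous_on {0..1} (y n)" for n by (rule lipschitz_on_continuous_on[OF lip])
  have "continuous_on {0..1} w" by (rule uniform_limit_theorem[OF _ conv]) (simp_all add: y_cont)
  have y_to_w: "(\<lambda>n. y n t) \<longlonglongrightarrow> w t" if "t \<in> {0..1}" for t
    by (rule tendsto_uniform_limitI[OF conv that])
  have P_conv: "(\<lambda>n. primitive2 (g n) t) \<longlonglongrightarrow> primitive2 gw t" if "t \<in> {0..1}" for t
  proof (rule primitive2_tendsto[OF _ _ _ that])
    show "continuous_on {0..1} (g n)" for n
      unfolding g_def by (rule continuous_on_delay_rhs[OF f_cont d(2) y_cont])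
    show "continuous_on {0..1} gw"
      unfolding gw_def by (intro continuous_intros continuous_on_truncated[OF f_cont] \<open>continuous_on {0..1} w\<close>)
    show "uniform_limit {0..1} g gw sequentially"
      unfolding g_def gw_def by (rule delay_rhs_uniform_limit[OF f_cont d lip conv])
  qed
  define v where "v = w 1 - w 0 - primitive2 gw 1"
  have "(\<lambda>n. y n 1 - y n 0 - primitive2 (g n) 1) \<longlonglongrightarrow> v"
    unfolding v_def by (intro tendsto_intros y_to_w P_conv) auto
  moreover have "b = (\<lambda>n. y n 1 - y n 0 - primitive2 (g n) 1)"
    using eq[of 1] unfolding g_def by (intro ext) simp
  ultimately have b_conv: "b \<longlonglongrightarrow> v" by simp
  have "w t = w 0 + v * t + primitive2 gw t" if "t \<in> {0..1}" for t
  proof -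
    have "(\<lambda>n. y n 0 + b n * t + primitive2 (g n) t) \<longlonglongrightarrow> w 0 + v * t + primitive2 gw t"
      by (intro tendsto_intros y_to_w b_conv P_conv that) simp
    moreover have "(\<lambda>n. y n 0 + b n * t + primitive2 (g n) t) = (\<lambda>n. y n t)"
      using eq[OF that] unfolding g_def by (intro ext) simp
    ultimately show ?thesis using LIMSEQ_unique y_to_w[OF that] by metis
  qed
  then show ?thesis unfolding gw_def by (rule that)
qed

lemma delay_limit_integral_solution:
  fixes y :: "nat \<Rightarrow> real \<Rightarrow> real" and b d :: "nat \<Rightarrow> real"
  assumes f_cont: "continuous_on ({0..1} \<times> UNIV) (\<lambda>(t, y). f t y)"
    and bvA: "bounded_variation_on A 0 1" and bvB: "bounded_variation_on B 0 1"
    and d: "d \<longlonglongrightarrow> 0" "\<And>n. d n > 0" and "L \<le> 2"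
    and eq: "\<And>n t. t \<in> {0..1} \<Longrightarrow> y n t = y n 0 + b n * t + primitive2 (delay_rhs f lam (d n) (y n)) t"
    and bound: "\<And>n t. t \<in> {0..1} \<Longrightarrow> \<bar>y n t\<bar> \<le> L"
    and lip: "\<And>n. L-lipschitz_on {0..1} (y n)"
    and RA: "\<And>n. has_RS_integral (y n) A 0 1 (y n 0)" and RB: "\<And>n. has_RS_integral (y n) B 0 1 (y n 1)"
    and conv: "uniform_limit {0..1} y w sequentially"
  obtains x0 v g where "continuous_on {0..1} g"
    "\<And>t. t \<in> {0..1} \<Longrightarrow> g t = - lam * f t (x0 + v * t + primitive2 g t)"
    "has_RS_integral (\<lambda>t. x0 + v * t + primitive2 g t) A 0 1 x0"
    "has_RS_integral (\<lambda>t. x0 + v * t + primitive2 g t) B 0 1 (x0 + v + primitive2 g 1)"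
proof -
  define gw where "gw = (\<lambda>s. - lam * truncated f s (w s))"
  obtain v where w_eq: "\<And>t. t \<in> {0..1} \<Longrightarrow> w t = w 0 + v * t + primitive2 gw t"
    unfolding gw_def
    by (rule delay_limit_integral_equation[OF f_cont d _ lip conv]) (rule eq | assumption | blast)+
  define x where "x t = w 0 + v * t + primitive2 gw t" for t
  have x_eq_w: "x t = w t" if "t \<in> {0..1}" for t
    unfolding x_def using w_eq[OF that] by simp
  have "continuous_on {0..1} w"
    by (rule uniform_limit_theorem[OF _ conv]) (simp_all add: lipschitz_on_continuous_on[OF lip])
  then have gw_cont: "continuous_on {0..1} gw"
    unfolding gw_def by (intro continuous_intros continuous_on_truncated[OF f_cont])
  have y_to_w: "(\<lambda>n. y n t) \<longlonglongrightarrow> w t" if "t \<in> {0..1}" for t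
    by (rule tendsto_uniform_limitI[OF conv that])
  have gw_eq: "gw t = - lam * f t (x t)" if "t \<in> {0..1}" for t
  proof -
    have "\<bar>w t\<bar> \<le> L"
      by (rule LIMSEQ_le_const2[OF tendsto_rabs[OF y_to_w[OF that]]]) (use bound that in auto)
    then have "clip (w t) = w t" using \<open>L \<le> 2\<close> by (simp add: clip_eq_self)
    then show ?thesis by (simp add: gw_def truncated_def x_eq_w[OF that])
  qed
  have x_deriv: "(x has_real_derivative v + primitive gw t) (at t within {0..1})" if "t \<in> {0..1}" for t
    unfolding x_def[abs_def]
    by (rule derivative_eq_intros has_real_derivative_primitive2[OF gw_cont that] | simp)+
  have x'_cont: "continuous_on {0..1} (\<lambda>t. v + primitive gw t)"
    by (intro continuous_intros continuous_on_primitive gw_cont)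
  have "uniform_limit {0..1} y x sequentially \<longleftrightarrow> uniform_limit {0..1} y w sequentially"
    by (rule uniform_limit_cong') (simp_all add: x_eq_w)
  with conv have x_conv: "uniform_limit {0..1} y x sequentially" by simp
  have "(\<lambda>n. y n 0) \<longlonglongrightarrow> x 0" "(\<lambda>n. y n 1) \<longlonglongrightarrow> x 1"
    using y_to_w[of 0] y_to_w[of 1] x_eq_w[of 0] x_eq_w[of 1] by simp_all
  then have "has_RS_integral x A 0 1 (x 0)" "has_RS_integral x B 0 1 (x 1)"
    by (intro has_RS_integral_uniform_limit_value[OF _ _ _ _ x_conv x_deriv x'_cont] bvA bvB RA RB; simp)+
  then show ?thesis
    using that[OF gw_cont, of "w 0" v] gw_eq unfolding x_def by simp
qed

definition bvp_solution ::
  "(real \<Rightarrow> real \<Rightarrow> real) \<Rightarrow> real \<Rightarrow> (real \<Rightarrow> real) \<Rightarrow> (real \<Rightarrow> real) \<Rightarrow> (real \<Rightarrow> real) \<Rightarrow> bool"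
where
  "bvp_solution f lam A B x \<longleftrightarrow> (\<exists>x' x''.
     (\<forall>t \<in> {0..1}. (x has_real_derivative x' t) (at t within {0..1})
                    \<and> (x' has_real_derivative x'' t) (at t within {0..1}))
     \<and> continuous_on {0..1} x''
     \<and> (\<forall>t \<in> {0..1}. x'' t = - lam * f t (x t))
     \<and> has_RS_integral x A 0 1 (x 0)
     \<and> has_RS_integral x B 0 1 (x 1))"

lemma bvp_solution_of_integral_equation:
  assumes g: "continuous_on {0..1} g"
    and "\<And>t. t \<in> {0..1} \<Longrightarrow> g t = - lam * f t (x0 + v * t + primitive2 g t)"
    and "has_RS_integral (\<lambda>t. x0 + v * t + primitive2 g t) A 0 1 x0"
    and "has_RS_integral (\<lambda>t. x0 + v * t + primitive2 g t) B 0 1 (x0 + v + primitive2 g 1)"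
  shows "bvp_solution f lam A B (\<lambda>t. x0 + v * t + primitive2 g t)"
  unfolding bvp_solution_def
proof (intro exI conjI ballI)
  fix t :: real assume t: "t \<in> {0..1}"
  show "((\<lambda>t. x0 + v * t + primitive2 g t) has_real_derivative v + primitive g t) (at t within {0..1})"
    by (rule derivative_eq_intros has_real_derivative_primitive2[OF g t] | simp)+
  show "((\<lambda>t. v + primitive g t) has_real_derivative g t) (at t within {0..1})"
    by (rule derivative_eq_intros has_real_derivative_primitive[OF g t] | simp)+
qed (use assms in simp_all)

lemma bvp_solution_exists:
  assumes f_cont: "continuous_on ({0..1} \<times> UNIV) (\<lambda>(t, y). f t y)"
    and bvA: "bounded_variation_on A 0 1" and bvB: "bounded_variation_on B 0 1"
    and C: "\<And>s z. s \<in> {0..1} \<Longrightarrow> \<bar>truncated f s z\<bar> \<le> C"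
    and small: "2 * \<bar>lam\<bar> * C \<le> 1 - (total_variation A 0 1 + total_variation (\<lambda>s. A s - B s) 0 1)"
  shows "\<exists>x. bvp_solution f lam A B x"
proof -
  define d :: "nat \<Rightarrow> real" where "d n = inverse (real (Suc n))" for n
  have d_pos: "d n > 0" for n by (simp add: d_def)
  obtain y b where eq: "\<And>n t. t \<in> {0..1} \<Longrightarrow> y n t = y n 0 + b n * t + primitive2 (delay_rhs f lam (d n) (y n)) t"
    and bound: "\<And>n t. t \<in> {0..1} \<Longrightarrow> \<bar>y n t\<bar> \<le> 1 + \<bar>lam\<bar> * C"
    and lip: "\<And>n. (1 + \<bar>lam\<bar> * C)-lipschitz_on {0..1} (y n)"
    and RS: "\<And>n. has_RS_integral (y n) A 0 1 (y n 0)" "\<And>n. has_RS_integral (y n) B 0 1 (y n 1)"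
    by (rule delay_bvp_solutions[where d = d, OF f_cont bvA bvB _ small d_pos])
       (rule C | assumption | blast)+
  obtain r w where r: "strict_mono r" and conv: "uniform_limit {0..1} (\<lambda>n. y (r n)) w sequentially"
    by (rule lipschitz_bounded_uniformly_convergent_subseq[where y = y and a = 0 and b = 1, OF _ lip])
       (rule bound | assumption | blast)+
  have d_lim: "(\<lambda>n. d (r n)) \<longlonglongrightarrow> 0"
    using LIMSEQ_subseq_LIMSEQ[OF LIMSEQ_inverse_real_of_nat r] by (simp add: o_def d_def)
  have "0 \<le> total_variation A 0 1 + total_variation (\<lambda>s. A s - B s) 0 1"
    using bvA bvB by (intro add_nonneg_nonneg total_variation_nonneg bounded_variation_on_diff) simp_all
  then have "1 + \<bar>lam\<bar> * C \<le> 2" using small by linarith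
  obtain x0 v g where "continuous_on {0..1} g"
    "\<And>t. t \<in> {0..1} \<Longrightarrow> g t = - lam * f t (x0 + v * t + primitive2 g t)"
    "has_RS_integral (\<lambda>t. x0 + v * t + primitive2 g t) A 0 1 x0"
    "has_RS_integral (\<lambda>t. x0 + v * t + primitive2 g t) B 0 1 (x0 + v + primitive2 g 1)"
    by (rule delay_limit_integral_solution[where y = "\<lambda>n. y (r n)" and b = "\<lambda>n. b (r n)",
          OF f_cont bvA bvB d_lim d_pos \<open>1 + \<bar>lam\<bar> * C \<le> 2\<close> _ _ lip RS conv])
       (rule eq bound | assumption | blast)+
  then show ?thesis by (blast intro: bvp_solution_of_integral_equation)
qed

theorem theorem4p17:
  fixes f :: "real \<Rightarrow> real \<Rightarrow> real" and A B :: "real \<Rightarrow> real"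
  assumes "continuous_on ({0..1} \<times> UNIV) (\<lambda>(t, y). f t y)"
    and "bounded_variation_on A 0 1" and "bounded_variation_on B 0 1"
    and "total_variation A 0 1 + total_variation (\<lambda>s. A s - B s) 0 1 < 1"
  shows "\<exists>lam0 > 0. \<forall>lam::real. \<bar>lam\<bar> \<le> lam0 \<longrightarrow>
           (\<exists>x x' x'' :: real \<Rightarrow> real.
              (\<forall>t \<in> {0..1}. (x has_real_derivative x' t) (at t within {0..1})
                             \<and> (x' has_real_derivative x'' t) (at t within {0..1}))
            \<and> continuous_on {0..1} x''
            \<and> (\<forall>t \<in> {0..1}. x'' t = - lam * f t (x t))
            \<and> has_RS_integral x A 0 1 (x 0)
            \<and> has_RS_integral x B 0 1 (x 1))"
proof -
  obtain C where "C > 0" and C: "\<And>s z. s \<in> {0..1} \<Longrightarrow> \<bar>truncated f s z\<bar> \<le> C"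
    using truncated_bounded[OF assms(1)] by blast
  define \<theta> where "\<theta> = total_variation A 0 1 + total_variation (\<lambda>s. A s - B s) 0 1"
  have "\<exists>x. bvp_solution f lam A B x" if "\<bar>lam\<bar> \<le> (1 - \<theta>) / (2 * C)" for lam
  proof (rule bvp_solution_exists[OF assms(1-3)])
    show "2 * \<bar>lam\<bar> * C \<le> 1 - (total_variation A 0 1 + total_variation (\<lambda>s. A s - B s) 0 1)"
      using that \<open>C > 0\<close> unfolding \<theta>_def by (simp add: field_simps)
  qed (rule C)
  moreover have "(1 - \<theta>) / (2 * C) > 0" using assms(4) \<open>C > 0\<close> unfolding \<theta>_def by simp
  ultimately show ?thesis unfolding bvp_solution_def by blast
qed

end
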